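(* Let $\mathcal{K}$ be a $2$-category with pseudolimits of arrows and powers by the free-living isomorphism, and let $f\colon A\to B$ be a morphism. Then: (1) $f$ is a representable isofibration if and only if $w_f\colon A^{\mathbb{I}}\to L_f$ is a representable isofibration; (2) $f$ is a normal isofibration if and only if $w_f$ is a normal isofibration. In either case, $w_f$ is then a retract equivalence.
   Context: $\mathbb{I}$ is the category with two objects and an isomorphism between them; $A^{\mathbb{I}}$ is the power of $A$ by $\mathbb{I}$ (equivalently the pseudolimit of $1_A$), with projections $\mathrm{dom},\mathrm{cod}\colon A^{\mathbb{I}}\to A$. The pseudolimit of $f$ is an object $L_f$ with $u_f\colon L_f\to A$, $v_f\colon L_f\to B$ and invertible $\lambda_f\colon v_f\cong fu_f$, universal among such data; it may be constructed as the pullback of $\mathrm{cod}\colon B^{\mathbb{I}}\to B$ along $f$. $w_f\colon A^{\mathbb{I}}\to L_f$ is the induced morphism with $u_fw_f=\mathrm{cod}$ and whose composite with the projection $L_f\to B^{\mathbb{I}}$ is $f^{\mathbb{I}}$ (it is the Leibniz power of $f$ by the inclusion $1\to\mathbb{I}$). An equivalence $f$ is a retract equivalence if it has a section (equivalently, it has equivalence data with counit an identity). A morphism $f\colon A\to B$ is a representable isofibration if for every object $X$, given $g\colon X\to A$, $h\colon X\to B$ and invertible $\alpha\colon fg\cong h$, there exist $h'\colon X\to A$ and invertible $\alpha'\colon g\cong h'$ with $f\alpha'=\alpha$. A cleavage is a choice of such $(\alpha',h')$ for every $(g,\alpha,h)$, natural in $X$; it is normal if $\alpha'$ is an identity whenever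 $\alpha$ is. A normal isofibration is a representable isofibration admitting a normal cleavage. *)

theory Defs
  imports Main
begin

text \<open>Ob: objects; Ar: 1-cells; sr/tg: source and target object of a 1-cell;
  Ce: 2-cells; d2/c2: domain and codomain 1-cell of a 2-cell;
  cmp g f: composite g after f of 1-cells; i1 A: identity 1-cell;
  vc \<beta> \<alpha>: vertical composite (\<beta> after \<alpha>); hc \<beta> \<alpha>: horizontal composite;
  i2 f: identity 2-cell on f.\<close>

record ('o, 'm, 'c) twocat =
  Ob  :: "'o set"
  Ar  :: "'m set"
  sr  :: "'m \<Rightarrow> 'o"
  tg  :: "'m \<Rightarrow> 'o"
  Ce  :: "'c set"
  d2  :: "'c \<Rightarrow> 'm"
  c2  :: "'c \<Rightarrow> 'm"
  cmp :: "'m \<Rightarrow> 'm \<Rightarrow> 'm"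
  i1  :: "'o \<Rightarrow> 'm"
  vc  :: "'c \<Rightarrow> 'c \<Rightarrow> 'c"
  hc  :: "'c \<Rightarrow> 'c \<Rightarrow> 'c"
  i2  :: "'m \<Rightarrow> 'c"

definition hom :: "('o,'m,'c,'x) twocat_scheme \<Rightarrow> 'o \<Rightarrow> 'o \<Rightarrow> 'm set" where
  "hom C X Y = {m \<in> Ar C. sr C m = X \<and> tg C m = Y}"

definition cells :: "('o,'m,'c,'x) twocat_scheme \<Rightarrow> 'm \<Rightarrow> 'm \<Rightarrow> 'c set" where
  "cells C f g = {\<alpha> \<in> Ce C. d2 C \<alpha> = f \<and> c2 C \<alpha> = g}"

definition two_category :: "('o,'m,'c,'x) twocat_scheme \<Rightarrow> bool" where
  "two_category C \<longleftrightarrow>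
    \<comment> \<open>underlying 1-category\<close>
    (\<forall>f\<in>Ar C. sr C f \<in> Ob C \<and> tg C f \<in> Ob C) \<and>
    (\<forall>A\<in>Ob C. i1 C A \<in> hom C A A) \<and>
    (\<forall>f\<in>Ar C. \<forall>g\<in>Ar C. sr C g = tg C f \<longrightarrow> cmp C g f \<in> hom C (sr C f) (tg C g)) \<and>
    (\<forall>f\<in>Ar C. \<forall>g\<in>Ar C. \<forall>h\<in>Ar C. sr C g = tg C f \<longrightarrow> sr C h = tg C g \<longrightarrow>
        cmp C h (cmp C g f) = cmp C (cmp C h g) f) \<and>
    (\<forall>f\<in>Ar C. cmp C (i1 C (tg C f)) f = f \<and> cmp C f (i1 C (sr C f)) = f) \<and>
    \<comment> \<open>2-cells go between parallel 1-cells; vertical structure\<close>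
    (\<forall>\<alpha>\<in>Ce C. d2 C \<alpha> \<in> Ar C \<and> c2 C \<alpha> \<in> Ar C \<and>
        sr C (d2 C \<alpha>) = sr C (c2 C \<alpha>) \<and> tg C (d2 C \<alpha>) = tg C (c2 C \<alpha>)) \<and>
    (\<forall>f\<in>Ar C. i2 C f \<in> cells C f f) \<and>
    (\<forall>\<alpha>\<in>Ce C. \<forall>\<beta>\<in>Ce C. d2 C \<beta> = c2 C \<alpha> \<longrightarrow> vc C \<beta> \<alpha> \<in> cells C (d2 C \<alpha>) (c2 C \<beta>)) \<and>
    (\<forall>\<alpha>\<in>Ce C. \<forall>\<beta>\<in>Ce C. \<forall>\<gamma>\<in>Ce C. d2 C \<beta> = c2 C \<alpha> \<longrightarrow> d2 C \<gamma> = c2 C \<beta> \<longrightarrow>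
        vc C \<gamma> (vc C \<beta> \<alpha>) = vc C (vc C \<gamma> \<beta>) \<alpha>) \<and>
    (\<forall>\<alpha>\<in>Ce C. vc C (i2 C (c2 C \<alpha>)) \<alpha> = \<alpha> \<and> vc C \<alpha> (i2 C (d2 C \<alpha>)) = \<alpha>) \<and>
    \<comment> \<open>horizontal composition, a functor on hom-categories\<close>
    (\<forall>\<alpha>\<in>Ce C. \<forall>\<beta>\<in>Ce C. sr C (d2 C \<beta>) = tg C (d2 C \<alpha>) \<longrightarrow>
        hc C \<beta> \<alpha> \<in> cells C (cmp C (d2 C \<beta>) (d2 C \<alpha>)) (cmp C (c2 C \<beta>) (c2 C \<alpha>))) \<and>
    (\<forall>\<alpha>\<in>Ce C. \<forall>\<beta>\<in>Ce C. \<forall>\<gamma>\<in>Ce C. sr C (d2 C \<beta>) = tg C (d2 C \<alpha>) \<longrightarrow>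
        sr C (d2 C \<gamma>) = tg C (d2 C \<beta>) \<longrightarrow>
        hc C \<gamma> (hc C \<beta> \<alpha>) = hc C (hc C \<gamma> \<beta>) \<alpha>) \<and>
    (\<forall>\<alpha>\<in>Ce C. hc C (i2 C (i1 C (tg C (d2 C \<alpha>)))) \<alpha> = \<alpha> \<and>
               hc C \<alpha> (i2 C (i1 C (sr C (d2 C \<alpha>)))) = \<alpha>) \<and>
    (\<forall>f\<in>Ar C. \<forall>g\<in>Ar C. sr C g = tg C f \<longrightarrow> hc C (i2 C g) (i2 C f) = i2 C (cmp C g f)) \<and>
    (\<forall>\<alpha>\<in>Ce C. \<forall>\<alpha>'\<in>Ce C. \<forall>\<beta>\<in>Ce C. \<forall>\<beta>'\<in>Ce C.
        d2 C \<alpha>' = c2 C \<alpha> \<longrightarrow> d2 C \<beta>' = c2 C \<beta> \<longrightarrow> sr C (d2 C \<beta>) = tg C (d2 C \<alpha>) \<longrightarrow>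
        hc C (vc C \<beta>' \<beta>) (vc C \<alpha>' \<alpha>) = vc C (hc C \<beta>' \<alpha>') (hc C \<beta> \<alpha>))"

definition lw :: "('o,'m,'c,'x) twocat_scheme \<Rightarrow> 'm \<Rightarrow> 'c \<Rightarrow> 'c" where
  "lw C f \<alpha> = hc C (i2 C f) \<alpha>"

definition rw :: "('o,'m,'c,'x) twocat_scheme \<Rightarrow> 'c \<Rightarrow> 'm \<Rightarrow> 'c" where
  "rw C \<alpha> f = hc C \<alpha> (i2 C f)"

definition iso2 :: "('o,'m,'c,'x) twocat_scheme \<Rightarrow> 'c \<Rightarrow> bool" where
  "iso2 C \<alpha> \<longleftrightarrow> \<alpha> \<in> Ce C \<and>
     (\<exists>\<beta> \<in> cells C (c2 C \<alpha>) (d2 C \<alpha>).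
        vc C \<beta> \<alpha> = i2 C (d2 C \<alpha>) \<and> vc C \<alpha> \<beta> = i2 C (c2 C \<alpha>))"

text \<open>(L, u, v, lam) is a pseudolimit of f : A \<rightarrow> B, with lam : v \<cong> f u invertible;
  the universal property is the (strict) isomorphism of categories between
  K(X, L) and the category of pseudo-cones over f with vertex X.\<close>

definition pseudolimit ::
  "('o,'m,'c,'x) twocat_scheme \<Rightarrow> 'm \<Rightarrow> 'o \<Rightarrow> 'm \<Rightarrow> 'm \<Rightarrow> 'c \<Rightarrow> bool" where
  "pseudolimit C f L u v lam \<longleftrightarrow>
     f \<in> Ar C \<and> L \<in> Ob C \<and> u \<in> hom C L (sr C f) \<and> v \<in> hom C L (tg C f) \<and>
     lam \<in> cells C v (cmp C f u) \<and> iso2 C lam \<and>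
     (\<forall>X\<in>Ob C. \<forall>a\<in>hom C X (sr C f). \<forall>b\<in>hom C X (tg C f).
        \<forall>\<beta>\<in>cells C b (cmp C f a). iso2 C \<beta> \<longrightarrow>
          (\<exists>!m. m \<in> hom C X L \<and> cmp C u m = a \<and> cmp C v m = b \<and> rw C lam m = \<beta>)) \<and>
     (\<forall>X\<in>Ob C. \<forall>m\<in>hom C X L. \<forall>m'\<in>hom C X L.
        \<forall>\<theta>u\<in>cells C (cmp C u m) (cmp C u m'). \<forall>\<theta>v\<in>cells C (cmp C v m) (cmp C v m').
          vc C (lw C f \<theta>u) (rw C lam m) = vc C (rw C lam m') \<theta>v \<longrightarrow>
          (\<exists>!\<theta>. \<theta> \<in> cells C m m' \<and> lw C u \<theta> = \<theta>u \<and> lw C v \<theta> = \<theta>v))"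

text \<open>(P, d, c, \<iota>) is the power of A by the free-living isomorphism \<I>
  (equivalently the pseudolimit of the identity of A), with \<iota> : d \<cong> c.\<close>

definition iso_power ::
  "('o,'m,'c,'x) twocat_scheme \<Rightarrow> 'o \<Rightarrow> 'o \<Rightarrow> 'm \<Rightarrow> 'm \<Rightarrow> 'c \<Rightarrow> bool" where
  "iso_power C A P d c \<iota> \<longleftrightarrow>
     A \<in> Ob C \<and> P \<in> Ob C \<and> d \<in> hom C P A \<and> c \<in> hom C P A \<and>
     \<iota> \<in> cells C d c \<and> iso2 C \<iota> \<and>
     (\<forall>X\<in>Ob C. \<forall>a\<in>hom C X A. \<forall>b\<in>hom C X A.
        \<forall>\<alpha>\<in>cells C a b. iso2 C \<alpha> \<longrightarrow>
          (\<exists>!m. m \<in> hom C X P \<and> cmp C d m = a \<and> cmp C c m = b \<and> rw C \<iota> m = \<alpha>)) \<and>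
     (\<forall>X\<in>Ob C. \<forall>m\<in>hom C X P. \<forall>m'\<in>hom C X P.
        \<forall>\<sigma>d\<in>cells C (cmp C d m) (cmp C d m'). \<forall>\<sigma>c\<in>cells C (cmp C c m) (cmp C c m').
          vc C (rw C \<iota> m') \<sigma>d = vc C \<sigma>c (rw C \<iota> m) \<longrightarrow>
          (\<exists>!\<sigma>. \<sigma> \<in> cells C m m' \<and> lw C d \<sigma> = \<sigma>d \<and> lw C c \<sigma> = \<sigma>c))"

definition has_pseudolimits_of_arrows :: "('o,'m,'c,'x) twocat_scheme \<Rightarrow> bool" where
  "has_pseudolimits_of_arrows C \<longleftrightarrow>
     (\<forall>f\<in>Ar C. \<exists>L u v lam. pseudolimit C f L u v lam)"

definition has_iso_powers :: "('o,'m,'c,'x) twocat_scheme \<Rightarrow> bool" where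
  "has_iso_powers C \<longleftrightarrow> (\<forall>A\<in>Ob C. \<exists>P d c \<iota>. iso_power C A P d c \<iota>)"

definition rep_isofib :: "('o,'m,'c,'x) twocat_scheme \<Rightarrow> 'm \<Rightarrow> bool" where
  "rep_isofib C f \<longleftrightarrow> f \<in> Ar C \<and>
     (\<forall>X\<in>Ob C. \<forall>g\<in>hom C X (sr C f). \<forall>h\<in>hom C X (tg C f).
        \<forall>\<alpha>\<in>cells C (cmp C f g) h. iso2 C \<alpha> \<longrightarrow>
          (\<exists>h'\<in>hom C X (sr C f). \<exists>\<alpha>'\<in>cells C g h'. iso2 C \<alpha>' \<and> lw C f \<alpha>' = \<alpha>))"

text \<open>A cleavage for f: a choice cl g \<alpha> = \<alpha>' (with h' = codomain of \<alpha>') for every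
  lifting problem (g, \<alpha>, h), natural in X (stable under precomposition).\<close>

definition cleavage :: "('o,'m,'c,'x) twocat_scheme \<Rightarrow> 'm \<Rightarrow> ('m \<Rightarrow> 'c \<Rightarrow> 'c) \<Rightarrow> bool" where
  "cleavage C f cl \<longleftrightarrow> f \<in> Ar C \<and>
     (\<forall>X\<in>Ob C. \<forall>g\<in>hom C X (sr C f). \<forall>h\<in>hom C X (tg C f).
        \<forall>\<alpha>\<in>cells C (cmp C f g) h. iso2 C \<alpha> \<longrightarrow>
          c2 C (cl g \<alpha>) \<in> hom C X (sr C f) \<and> cl g \<alpha> \<in> cells C g (c2 C (cl g \<alpha>)) \<and>
          iso2 C (cl g \<alpha>) \<and> lw C f (cl g \<alpha>) = \<alpha> \<and>
          (\<forall>Y\<in>Ob C. \<forall>k\<in>hom C Y X. cl (cmp C g k) (rw C \<alpha> k) = rw C (cl g \<alpha>) k))"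

definition normal_cleavage :: "('o,'m,'c,'x) twocat_scheme \<Rightarrow> 'm \<Rightarrow> ('m \<Rightarrow> 'c \<Rightarrow> 'c) \<Rightarrow> bool" where
  "normal_cleavage C f cl \<longleftrightarrow> cleavage C f cl \<and>
     (\<forall>X\<in>Ob C. \<forall>g\<in>hom C X (sr C f). cl g (i2 C (cmp C f g)) = i2 C g)"

definition normal_isofib :: "('o,'m,'c,'x) twocat_scheme \<Rightarrow> 'm \<Rightarrow> bool" where
  "normal_isofib C f \<longleftrightarrow> rep_isofib C f \<and> (\<exists>cl. normal_cleavage C f cl)"

definition equivalence :: "('o,'m,'c,'x) twocat_scheme \<Rightarrow> 'm \<Rightarrow> bool" where
  "equivalence C f \<longleftrightarrow> f \<in> Ar C \<and>
     (\<exists>g\<in>hom C (tg C f) (sr C f).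
        (\<exists>\<eta>\<in>cells C (i1 C (sr C f)) (cmp C g f). iso2 C \<eta>) \<and>
        (\<exists>\<epsilon>\<in>cells C (cmp C f g) (i1 C (tg C f)). iso2 C \<epsilon>))"

definition retract_equivalence :: "('o,'m,'c,'x) twocat_scheme \<Rightarrow> 'm \<Rightarrow> bool" where
  "retract_equivalence C f \<longleftrightarrow> equivalence C f \<and>
     (\<exists>s\<in>hom C (tg C f) (sr C f). cmp C f s = i1 C (tg C f))"

end

theory Submission
  imports Defs
begin

text \<open>
  A morphism \<open>g : X \<rightarrow> A\<^sup>\<I>\<close> amounts to an invertible 2-cell \<open>dm g \<cong> cd g\<close>, and \<open>w\<^sub>f\<close> sends it to the
  pseudo-cone \<open>(cd g, f dm g, f \<iota> g)\<close> over \<open>f\<close>. Given an invertible \<open>\<gamma> : w\<^sub>f g \<cong> h\<close> into \<open>L\<^sub>f\<close>, lift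
  its \<open>v\<close>-component along \<open>f\<close> to \<open>\<sigma> : dm g \<cong> a\<close>; the composite of \<open>\<sigma>\<^sup>-\<^sup>1\<close>, \<open>\<iota> g\<close> and the
  \<open>u\<close>-component of \<open>\<gamma>\<close> is a path \<open>h'\<close> with \<open>w\<^sub>f h' = h\<close>, and the two-dimensional universal property
  of \<open>A\<^sup>\<I>\<close> assembles \<open>\<sigma>\<close> and \<open>u \<gamma>\<close> into a lift \<open>g \<cong> h'\<close> of \<open>\<gamma>\<close>. Conversely, an invertible
  \<open>\<alpha> : f g \<cong> h\<close> is the \<open>v\<close>-component of a 2-cell from \<open>w\<^sub>f\<close> of the constant path at \<open>g\<close> to the cone
  \<open>(g, h, \<alpha>\<^sup>-\<^sup>1)\<close>, and the \<open>dm\<close>-component of a lift of that 2-cell along \<open>w\<^sub>f\<close> lifts \<open>\<alpha>\<close>.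
  Both translations are built from maps and 2-cells induced by universal properties, so they
  commute with precomposition and preserve identities: cleavages and normal cleavages transfer.
  Lifting \<open>\<lambda>\<^sup>-\<^sup>1 : f u \<cong> v\<close> along \<open>f\<close> yields a path \<open>s\<close> with \<open>w\<^sub>f s = 1\<close>, and the universal property
  of \<open>A\<^sup>\<I>\<close> gives an invertible \<open>1 \<cong> s w\<^sub>f\<close>.
\<close>

section \<open>Strict 2-categories\<close>

locale two_cat =
  fixes C :: "('o,'m,'c,'x) twocat_scheme"
  assumes two_category: "two_category C"
begin

lemma hom_objects: "m \<in> hom C X Y \<Longrightarrow> X \<in> Ob C \<and> Y \<in> Ob C"
  using two_category unfolding two_category_def hom_def by (elim conjE) auto

lemma comp_hom: "f \<in> hom C X Y \<Longrightarrow> g \<in> hom C Y Z \<Longrightarrow> cmp C g f \<in> hom C X Z"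
  using two_category unfolding two_category_def hom_def by auto

lemma id_hom: "X \<in> Ob C \<Longrightarrow> i1 C X \<in> hom C X X"
  using two_category unfolding two_category_def by auto

lemma comp_assoc:
  "f \<in> hom C X Y \<Longrightarrow> g \<in> hom C Y Z \<Longrightarrow> h \<in> hom C Z W \<Longrightarrow>
   cmp C (cmp C h g) f = cmp C h (cmp C g f)"
  using two_category unfolding two_category_def hom_def by auto

lemma comp_id_left [simp]: "f \<in> hom C X Y \<Longrightarrow> cmp C (i1 C Y) f = f"
  using two_category unfolding two_category_def hom_def by auto

lemma comp_id_right [simp]: "f \<in> hom C X Y \<Longrightarrow> cmp C f (i1 C X) = f"
  using two_category unfolding two_category_def hom_def by auto

lemma cells_cod_hom: "\<alpha> \<in> cells C f g \<Longrightarrow> f \<in> hom C X Y \<Longrightarrow> g \<in> hom C X Y"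
  using two_category unfolding two_category_def hom_def cells_def by auto

lemma id2_cells: "f \<in> hom C X Y \<Longrightarrow> i2 C f \<in> cells C f f"
  using two_category unfolding two_category_def hom_def by auto

lemma vc_cells: "\<alpha> \<in> cells C f g \<Longrightarrow> \<beta> \<in> cells C g h \<Longrightarrow> vc C \<beta> \<alpha> \<in> cells C f h"
  using two_category unfolding two_category_def cells_def by auto

lemma vc_assoc:
  "\<alpha> \<in> cells C f g \<Longrightarrow> \<beta> \<in> cells C g h \<Longrightarrow> \<gamma> \<in> cells C h k \<Longrightarrow>
   vc C (vc C \<gamma> \<beta>) \<alpha> = vc C \<gamma> (vc C \<beta> \<alpha>)"
  using two_category unfolding two_category_def cells_def by auto

lemma vc_id_left [simp]: "\<alpha> \<in> cells C f g \<Longrightarrow> vc C (i2 C g) \<alpha> = \<alpha>"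
  using two_category unfolding two_category_def cells_def by auto

lemma vc_id_right [simp]: "\<alpha> \<in> cells C f g \<Longrightarrow> vc C \<alpha> (i2 C f) = \<alpha>"
  using two_category unfolding two_category_def cells_def by auto

lemma hc_cells:
  "\<alpha> \<in> cells C f f' \<Longrightarrow> f \<in> hom C X Y \<Longrightarrow> \<beta> \<in> cells C g g' \<Longrightarrow> g \<in> hom C Y Z \<Longrightarrow>
   hc C \<beta> \<alpha> \<in> cells C (cmp C g f) (cmp C g' f')"
  using two_category unfolding two_category_def hom_def cells_def by auto

lemma hc_assoc:
  "\<alpha> \<in> cells C f f' \<Longrightarrow> f \<in> hom C X Y \<Longrightarrow> \<beta> \<in> cells C g g' \<Longrightarrow> g \<in> hom C Y Z \<Longrightarrow>
   \<gamma> \<in> cells C h h' \<Longrightarrow> h \<in> hom C Z W \<Longrightarrow> hc C (hc C \<gamma> \<beta>) \<alpha> = hc C \<gamma> (hc C \<beta> \<alpha>)"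
  using two_category unfolding two_category_def hom_def cells_def by auto

lemma hc_id2: "f \<in> hom C X Y \<Longrightarrow> g \<in> hom C Y Z \<Longrightarrow> hc C (i2 C g) (i2 C f) = i2 C (cmp C g f)"
  using two_category unfolding two_category_def hom_def by auto

lemma hc_id_left: "\<alpha> \<in> cells C f f' \<Longrightarrow> f \<in> hom C X Y \<Longrightarrow> hc C (i2 C (i1 C Y)) \<alpha> = \<alpha>"
  using two_category unfolding two_category_def hom_def cells_def by auto

lemma hc_id_right: "\<alpha> \<in> cells C f f' \<Longrightarrow> f \<in> hom C X Y \<Longrightarrow> hc C \<alpha> (i2 C (i1 C X)) = \<alpha>"
  using two_category unfolding two_category_def hom_def cells_def by auto

lemma interchange:
  "\<alpha> \<in> cells C f f' \<Longrightarrow> \<alpha>' \<in> cells C f' f'' \<Longrightarrow> f \<in> hom C X Y \<Longrightarrow>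
   \<beta> \<in> cells C g g' \<Longrightarrow> \<beta>' \<in> cells C g' g'' \<Longrightarrow> g \<in> hom C Y Z \<Longrightarrow>
   hc C (vc C \<beta>' \<beta>) (vc C \<alpha>' \<alpha>) = vc C (hc C \<beta>' \<alpha>') (hc C \<beta> \<alpha>)"
  using two_category unfolding two_category_def hom_def cells_def by auto

lemma lw_cells:
  "\<alpha> \<in> cells C f f' \<Longrightarrow> f \<in> hom C X Y \<Longrightarrow> g \<in> hom C Y Z \<Longrightarrow>
   lw C g \<alpha> \<in> cells C (cmp C g f) (cmp C g f')"
  unfolding lw_def by (rule hc_cells) (auto intro: id2_cells)

lemma rw_cells:
  "\<alpha> \<in> cells C g g' \<Longrightarrow> g \<in> hom C Y Z \<Longrightarrow> f \<in> hom C X Y \<Longrightarrow>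
   rw C \<alpha> f \<in> cells C (cmp C g f) (cmp C g' f)"
  unfolding rw_def by (rule hc_cells) (auto intro: id2_cells)

lemma lw_vc:
  assumes "\<alpha> \<in> cells C f f'" "\<beta> \<in> cells C f' f''" "f \<in> hom C X Y" "g \<in> hom C Y Z"
  shows "lw C g (vc C \<beta> \<alpha>) = vc C (lw C g \<beta>) (lw C g \<alpha>)"
proof -
  have "lw C g (vc C \<beta> \<alpha>) = hc C (vc C (i2 C g) (i2 C g)) (vc C \<beta> \<alpha>)"
    unfolding lw_def using id2_cells[OF assms(4)] by simp
  also have "\<dots> = vc C (lw C g \<beta>) (lw C g \<alpha>)"
    unfolding lw_def using assms id2_cells
    by (intro interchange[of \<alpha> f f' \<beta> f'' X Y "i2 C g" g g "i2 C g" g Z]) auto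
  finally show ?thesis .
qed

lemma rw_vc:
  assumes "\<alpha> \<in> cells C g g'" "\<beta> \<in> cells C g' g''" "g \<in> hom C Y Z" "f \<in> hom C X Y"
  shows "rw C (vc C \<beta> \<alpha>) f = vc C (rw C \<beta> f) (rw C \<alpha> f)"
proof -
  have "rw C (vc C \<beta> \<alpha>) f = hc C (vc C \<beta> \<alpha>) (vc C (i2 C f) (i2 C f))"
    unfolding rw_def using id2_cells[OF assms(4)] by simp
  also have "\<dots> = vc C (rw C \<beta> f) (rw C \<alpha> f)"
    unfolding rw_def using assms id2_cells
    by (intro interchange[of "i2 C f" f f "i2 C f" f X Y \<alpha> g g' \<beta> g'' Z]) auto
  finally show ?thesis .
qed

lemma lw_lw:
  assumes "\<alpha> \<in> cells C f f'" "f \<in> hom C X Y" "g \<in> hom C Y Z" "h \<in> hom C Z W"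
  shows "lw C h (lw C g \<alpha>) = lw C (cmp C h g) \<alpha>"
  unfolding lw_def using assms id2_cells
  by (simp add: hc_assoc[of \<alpha> f f' X Y "i2 C g" g g Z "i2 C h" h h W, symmetric] hc_id2)

lemma rw_rw:
  assumes "\<alpha> \<in> cells C h h'" "f \<in> hom C X Y" "g \<in> hom C Y Z" "h \<in> hom C Z W"
  shows "rw C (rw C \<alpha> g) f = rw C \<alpha> (cmp C g f)"
  unfolding rw_def using assms id2_cells
  by (simp add: hc_assoc[of "i2 C f" f f X Y "i2 C g" g g Z \<alpha> h h' W] hc_id2)

lemma lw_rw:
  assumes "\<alpha> \<in> cells C g g'" "f \<in> hom C X Y" "g \<in> hom C Y Z" "h \<in> hom C Z W"
  shows "lw C h (rw C \<alpha> f) = rw C (lw C h \<alpha>) f"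
  unfolding rw_def lw_def using assms id2_cells
  by (simp add: hc_assoc[of "i2 C f" f f X Y \<alpha> g g' Z "i2 C h" h h W])

lemma lw_id2: "f \<in> hom C X Y \<Longrightarrow> g \<in> hom C Y Z \<Longrightarrow> lw C g (i2 C f) = i2 C (cmp C g f)"
  unfolding lw_def by (rule hc_id2)

lemma rw_id2: "f \<in> hom C X Y \<Longrightarrow> g \<in> hom C Y Z \<Longrightarrow> rw C (i2 C g) f = i2 C (cmp C g f)"
  unfolding rw_def by (rule hc_id2)

lemma lw_id: "\<alpha> \<in> cells C f f' \<Longrightarrow> f \<in> hom C X Y \<Longrightarrow> lw C (i1 C Y) \<alpha> = \<alpha>"
  unfolding lw_def by (rule hc_id_left)

lemma rw_id: "\<alpha> \<in> cells C f f' \<Longrightarrow> f \<in> hom C X Y \<Longrightarrow> rw C \<alpha> (i1 C X) = \<alpha>"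
  unfolding rw_def by (rule hc_id_right)

lemma whisker_exchange:
  assumes "\<alpha> \<in> cells C f f'" "f \<in> hom C X Y" "\<beta> \<in> cells C g g'" "g \<in> hom C Y Z"
  shows "vc C (lw C g' \<alpha>) (rw C \<beta> f) = vc C (rw C \<beta> f') (lw C g \<alpha>)"
proof -
  have f': "f' \<in> hom C X Y" and g': "g' \<in> hom C Y Z"
    using assms cells_cod_hom by blast+
  have "vc C (lw C g' \<alpha>) (rw C \<beta> f) = hc C (vc C (i2 C g') \<beta>) (vc C \<alpha> (i2 C f))"
    unfolding lw_def rw_def using assms g' id2_cells
    by (intro interchange[of "i2 C f" f f \<alpha> f' X Y \<beta> g g' "i2 C g'" g' Z, symmetric]) auto
  also have "\<dots> = hc C (vc C \<beta> (i2 C g)) (vc C (i2 C f') \<alpha>)"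
    using assms by simp
  also have "\<dots> = vc C (rw C \<beta> f') (lw C g \<alpha>)"
    unfolding lw_def rw_def using assms f' id2_cells
    by (intro interchange[of \<alpha> f f' "i2 C f'" f' X Y "i2 C g" g g \<beta> g' Z]) auto
  finally show ?thesis .
qed

end

definition inv2 :: "('o,'m,'c,'x) twocat_scheme \<Rightarrow> 'c \<Rightarrow> 'c" where
  "inv2 C \<alpha> = (SOME \<beta>. \<beta> \<in> cells C (c2 C \<alpha>) (d2 C \<alpha>) \<and>
     vc C \<beta> \<alpha> = i2 C (d2 C \<alpha>) \<and> vc C \<alpha> \<beta> = i2 C (c2 C \<alpha>))"

context two_cat
begin

lemma iso2I:
  "\<alpha> \<in> cells C f g \<Longrightarrow> \<beta> \<in> cells C g f \<Longrightarrow> vc C \<beta> \<alpha> = i2 C f \<Longrightarrow> vc C \<alpha> \<beta> = i2 C g \<Longrightarrow>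
   iso2 C \<alpha>"
  unfolding iso2_def cells_def by auto

lemma inv2:
  assumes "iso2 C \<alpha>" "\<alpha> \<in> cells C f g"
  shows inv2_cells: "inv2 C \<alpha> \<in> cells C g f"
    and inv2_vc: "vc C (inv2 C \<alpha>) \<alpha> = i2 C f"
    and vc_inv2: "vc C \<alpha> (inv2 C \<alpha>) = i2 C g"
proof -
  have "\<exists>\<beta>. \<beta> \<in> cells C (c2 C \<alpha>) (d2 C \<alpha>) \<and>
      vc C \<beta> \<alpha> = i2 C (d2 C \<alpha>) \<and> vc C \<alpha> \<beta> = i2 C (c2 C \<alpha>)"
    using assms(1) unfolding iso2_def by blast
  from someI_ex[OF this] assms(2) show "inv2 C \<alpha> \<in> cells C g f"
    "vc C (inv2 C \<alpha>) \<alpha> = i2 C f" "vc C \<alpha> (inv2 C \<alpha>) = i2 C g"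
    unfolding inv2_def cells_def by auto
qed

lemma iso2_inv2: "iso2 C \<alpha> \<Longrightarrow> \<alpha> \<in> cells C f g \<Longrightarrow> iso2 C (inv2 C \<alpha>)"
  by (rule iso2I[OF inv2_cells _ vc_inv2 inv2_vc])

lemma inv2_vc_cancel:
  "iso2 C \<alpha> \<Longrightarrow> \<alpha> \<in> cells C f g \<Longrightarrow> x \<in> cells C e f \<Longrightarrow> vc C (inv2 C \<alpha>) (vc C \<alpha> x) = x"
  using vc_assoc[of x e f \<alpha> g "inv2 C \<alpha>" f] by (simp add: inv2)

lemma vc_inv2_cancel:
  "iso2 C \<alpha> \<Longrightarrow> \<alpha> \<in> cells C f g \<Longrightarrow> x \<in> cells C e g \<Longrightarrow> vc C \<alpha> (vc C (inv2 C \<alpha>) x) = x"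
  using vc_assoc[of x e g "inv2 C \<alpha>" f \<alpha> g] by (simp add: inv2)

lemma vc_inv2_cancel_right:
  "iso2 C \<alpha> \<Longrightarrow> \<alpha> \<in> cells C f g \<Longrightarrow> x \<in> cells C g h \<Longrightarrow> vc C (vc C x \<alpha>) (inv2 C \<alpha>) = x"
  using vc_assoc[of "inv2 C \<alpha>" g f \<alpha> g x h] by (simp add: inv2)

lemma inv2_vc_cancel_right:
  "iso2 C \<alpha> \<Longrightarrow> \<alpha> \<in> cells C f g \<Longrightarrow> x \<in> cells C f h \<Longrightarrow> vc C (vc C x (inv2 C \<alpha>)) \<alpha> = x"
  using vc_assoc[of \<alpha> f g "inv2 C \<alpha>" f x h] by (simp add: inv2)

lemma inv2_unique:
  assumes "iso2 C \<alpha>" "\<alpha> \<in> cells C f g" "\<beta> \<in> cells C g f" "vc C \<beta> \<alpha> = i2 C f"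
  shows "inv2 C \<alpha> = \<beta>"
  using vc_inv2_cancel_right[OF assms(1-3)] assms(4) inv2[OF assms(1,2)] by simp

lemma inv2_inv2: "iso2 C \<alpha> \<Longrightarrow> \<alpha> \<in> cells C f g \<Longrightarrow> inv2 C (inv2 C \<alpha>) = \<alpha>"
  by (rule inv2_unique[OF iso2_inv2 inv2_cells]) (simp_all add: inv2)

lemma iso2_id2: "f \<in> hom C X Y \<Longrightarrow> iso2 C (i2 C f)"
  using id2_cells[of f X Y] by (intro iso2I[of _ f f "i2 C f"]) simp_all

lemma inv2_id2: "f \<in> hom C X Y \<Longrightarrow> inv2 C (i2 C f) = i2 C f"
  using id2_cells[of f X Y] by (intro inv2_unique[OF iso2_id2]) simp_all

lemma iso2_vc:
  assumes "iso2 C \<alpha>" "\<alpha> \<in> cells C f g" "iso2 C \<beta>" "\<beta> \<in> cells C g h"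
  shows "iso2 C (vc C \<beta> \<alpha>)"
proof -
  have inv: "vc C (inv2 C \<alpha>) (inv2 C \<beta>) \<in> cells C h f"
    using inv2_cells[OF assms(3,4)] inv2_cells[OF assms(1,2)] by (rule vc_cells)
  show ?thesis
  proof (rule iso2I[OF vc_cells[OF assms(2,4)] inv])
    show "vc C (vc C (inv2 C \<alpha>) (inv2 C \<beta>)) (vc C \<beta> \<alpha>) = i2 C f"
      using vc_assoc[OF vc_cells[OF assms(2,4)] inv2_cells[OF assms(3,4)] inv2_cells[OF assms(1,2)]]
      by (simp add: inv2_vc_cancel[OF assms(3,4,2)] inv2_vc[OF assms(1,2)])
    show "vc C (vc C \<beta> \<alpha>) (vc C (inv2 C \<alpha>) (inv2 C \<beta>)) = i2 C h"
      using vc_assoc[OF inv assms(2,4)]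
      by (simp add: vc_inv2_cancel[OF assms(1,2) inv2_cells[OF assms(3,4)]] vc_inv2[OF assms(3,4)])
  qed
qed

lemma
  assumes "iso2 C \<alpha>" "\<alpha> \<in> cells C f f'" "f \<in> hom C X Y" "g \<in> hom C Y Z"
  shows iso2_lw: "iso2 C (lw C g \<alpha>)"
    and inv2_lw: "inv2 C (lw C g \<alpha>) = lw C g (inv2 C \<alpha>)"
proof -
  have f': "f' \<in> hom C X Y" using assms cells_cod_hom by blast
  have cells: "lw C g \<alpha> \<in> cells C (cmp C g f) (cmp C g f')"
    "lw C g (inv2 C \<alpha>) \<in> cells C (cmp C g f') (cmp C g f)"
    using assms f' by (auto intro: lw_cells inv2_cells)
  have inv: "vc C (lw C g (inv2 C \<alpha>)) (lw C g \<alpha>) = i2 C (cmp C g f)"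
    using lw_vc[OF assms(2) inv2_cells[OF assms(1,2)] assms(3,4), symmetric]
    by (simp add: inv2_vc[OF assms(1,2)] lw_id2[OF assms(3,4)])
  moreover have "vc C (lw C g \<alpha>) (lw C g (inv2 C \<alpha>)) = i2 C (cmp C g f')"
    using lw_vc[OF inv2_cells[OF assms(1,2)] assms(2) f' assms(4), symmetric]
    by (simp add: vc_inv2[OF assms(1,2)] lw_id2[OF f' assms(4)])
  ultimately show iso: "iso2 C (lw C g \<alpha>)"
    using cells by (blast intro: iso2I)
  show "inv2 C (lw C g \<alpha>) = lw C g (inv2 C \<alpha>)"
    using inv2_unique[OF iso cells inv] .
qed

lemma
  assumes "iso2 C \<alpha>" "\<alpha> \<in> cells C g g'" "g \<in> hom C Y Z" "f \<in> hom C X Y"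
  shows iso2_rw: "iso2 C (rw C \<alpha> f)"
    and inv2_rw: "inv2 C (rw C \<alpha> f) = rw C (inv2 C \<alpha>) f"
proof -
  have g': "g' \<in> hom C Y Z" using assms cells_cod_hom by blast
  have cells: "rw C \<alpha> f \<in> cells C (cmp C g f) (cmp C g' f)"
    "rw C (inv2 C \<alpha>) f \<in> cells C (cmp C g' f) (cmp C g f)"
    using assms g' by (auto intro: rw_cells inv2_cells)
  have inv: "vc C (rw C (inv2 C \<alpha>) f) (rw C \<alpha> f) = i2 C (cmp C g f)"
    using rw_vc[OF assms(2) inv2_cells[OF assms(1,2)] assms(3,4), symmetric]
    by (simp add: inv2_vc[OF assms(1,2)] rw_id2[OF assms(4,3)])
  moreover have "vc C (rw C \<alpha> f) (rw C (inv2 C \<alpha>) f) = i2 C (cmp C g' f)"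
    using rw_vc[OF inv2_cells[OF assms(1,2)] assms(2) g' assms(4), symmetric]
    by (simp add: vc_inv2[OF assms(1,2)] rw_id2[OF assms(4) g'])
  ultimately show iso: "iso2 C (rw C \<alpha> f)"
    using cells by (blast intro: iso2I)
  show "inv2 C (rw C \<alpha> f) = rw C (inv2 C \<alpha>) f"
    using inv2_unique[OF iso cells inv] .
qed

lemma iso_square_inv2:
  assumes "iso2 C x" "x \<in> cells C P P'" "iso2 C y" "y \<in> cells C Q Q'"
    and "p \<in> cells C P Q" "p' \<in> cells C P' Q'" "vc C p' x = vc C y p"
  shows "vc C p (inv2 C x) = vc C (inv2 C y) p'"
proof -
  have "vc C (vc C (inv2 C y) p') x = p"
    using assms vc_assoc[of x P P' p' Q' "inv2 C y" Q] inv2_vc_cancel[of y Q Q' p P]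
    by (simp add: inv2_cells)
  then show ?thesis
    using assms vc_inv2_cancel_right[of x P P' "vc C (inv2 C y) p'" Q]
    by (simp add: inv2_cells vc_cells)
qed

end

(* A cleavage without the naturality condition. *)
definition iso_lifting :: "('o,'m,'c,'x) twocat_scheme \<Rightarrow> 'm \<Rightarrow> ('m \<Rightarrow> 'c \<Rightarrow> 'c) \<Rightarrow> bool" where
  "iso_lifting C f cl \<longleftrightarrow> f \<in> Ar C \<and>
     (\<forall>X\<in>Ob C. \<forall>g\<in>hom C X (sr C f). \<forall>h\<in>hom C X (tg C f).
        \<forall>\<alpha>\<in>cells C (cmp C f g) h. iso2 C \<alpha> \<longrightarrow>
          c2 C (cl g \<alpha>) \<in> hom C X (sr C f) \<and> cl g \<alpha> \<in> cells C g (c2 C (cl g \<alpha>)) \<and>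
          iso2 C (cl g \<alpha>) \<and> lw C f (cl g \<alpha>) = \<alpha>)"

lemma rep_isofib_iff_iso_lifting: "rep_isofib C f \<longleftrightarrow> (\<exists>cl. iso_lifting C f cl)"
proof
  assume f: "rep_isofib C f"
  define cl where "cl g \<alpha> = (SOME \<alpha>'. \<exists>h'\<in>hom C (sr C g) (sr C f).
      \<alpha>' \<in> cells C g h' \<and> iso2 C \<alpha>' \<and> lw C f \<alpha>' = \<alpha>)" for g \<alpha>
  have "iso_lifting C f cl"
    unfolding iso_lifting_def
  proof (intro conjI ballI impI)
    show "f \<in> Ar C"
      using f unfolding rep_isofib_def by blast
    fix X g h \<alpha>
    assume "X \<in> Ob C" "g \<in> hom C X (sr C f)" "h \<in> hom C X (tg C f)"
      "\<alpha> \<in> cells C (cmp C f g) h" "iso2 C \<alpha>"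
    moreover have "sr C g = X"
      using \<open>g \<in> hom C X (sr C f)\<close> by (simp add: hom_def)
    ultimately have "\<exists>\<alpha>'. \<exists>h'\<in>hom C (sr C g) (sr C f).
        \<alpha>' \<in> cells C g h' \<and> iso2 C \<alpha>' \<and> lw C f \<alpha>' = \<alpha>"
      using f unfolding rep_isofib_def by blast
    from someI_ex[OF this] \<open>g \<in> hom C X (sr C f)\<close>
    have "\<exists>h'\<in>hom C X (sr C f). cl g \<alpha> \<in> cells C g h' \<and> iso2 C (cl g \<alpha>) \<and> lw C f (cl g \<alpha>) = \<alpha>"
      unfolding cl_def by (simp add: hom_def)
    then show "c2 C (cl g \<alpha>) \<in> hom C X (sr C f)" "cl g \<alpha> \<in> cells C g (c2 C (cl g \<alpha>))"
      "iso2 C (cl g \<alpha>)" "lw C f (cl g \<alpha>) = \<alpha>"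
      by (auto simp: cells_def)
  qed
  then show "\<exists>cl. iso_lifting C f cl" by blast
next
  assume "\<exists>cl. iso_lifting C f cl"
  then show "rep_isofib C f"
    unfolding iso_lifting_def rep_isofib_def by blast
qed

lemma cleavage_imp_iso_lifting: "cleavage C f cl \<Longrightarrow> iso_lifting C f cl"
  unfolding cleavage_def iso_lifting_def by blast

context two_cat
begin

lemma iso_liftingD:
  assumes "iso_lifting C f cl" "g \<in> hom C X (sr C f)" "\<alpha> \<in> cells C (cmp C f g) h" "iso2 C \<alpha>"
  shows "c2 C (cl g \<alpha>) \<in> hom C X (sr C f)" "cl g \<alpha> \<in> cells C g (c2 C (cl g \<alpha>))"
    "iso2 C (cl g \<alpha>)" "lw C f (cl g \<alpha>) = \<alpha>"
proof -
  have "f \<in> hom C (sr C f) (tg C f)"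
    using assms(1) unfolding iso_lifting_def hom_def by blast
  then have "h \<in> hom C X (tg C f)" "X \<in> Ob C"
    using assms(2,3) comp_hom cells_cod_hom hom_objects by blast+
  then show "c2 C (cl g \<alpha>) \<in> hom C X (sr C f)" "cl g \<alpha> \<in> cells C g (c2 C (cl g \<alpha>))"
    "iso2 C (cl g \<alpha>)" "lw C f (cl g \<alpha>) = \<alpha>"
    using assms unfolding iso_lifting_def by blast+
qed

lemma cleavage_natural:
  assumes "cleavage C f cl" "g \<in> hom C X (sr C f)" "\<alpha> \<in> cells C (cmp C f g) h" "iso2 C \<alpha>"
    "k \<in> hom C Y X"
  shows "cl (cmp C g k) (rw C \<alpha> k) = rw C (cl g \<alpha>) k"
proof -
  have "f \<in> hom C (sr C f) (tg C f)"
    using assms(1) unfolding cleavage_def hom_def by blast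
  then have "h \<in> hom C X (tg C f)" "X \<in> Ob C" "Y \<in> Ob C"
    using assms(2,3,5) comp_hom cells_cod_hom hom_objects by blast+
  then show ?thesis
    using assms unfolding cleavage_def by blast
qed

lemma normal_cleavageD:
  "normal_cleavage C f cl \<Longrightarrow> g \<in> hom C X (sr C f) \<Longrightarrow> cl g (i2 C (cmp C f g)) = i2 C g"
  using hom_objects unfolding normal_cleavage_def by blast

end

lemma cleavageI:
  assumes "iso_lifting C f cl"
    and "\<And>X Y g h \<alpha> k. g \<in> hom C X (sr C f) \<Longrightarrow> \<alpha> \<in> cells C (cmp C f g) h \<Longrightarrow> iso2 C \<alpha> \<Longrightarrow>
      k \<in> hom C Y X \<Longrightarrow> cl (cmp C g k) (rw C \<alpha> k) = rw C (cl g \<alpha>) k"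
  shows "cleavage C f cl"
  using assms unfolding cleavage_def iso_lifting_def by blast

section \<open>Pseudolimits of arrows\<close>

locale arrow_pseudolimit = two_cat +
  fixes f :: 'm and A B L :: 'o and u v :: 'm and lam :: 'c
  assumes f_hom: "f \<in> hom C A B"
    and pseudolimit: "pseudolimit C f L u v lam"
begin

lemma u_hom: "u \<in> hom C L A"
  and v_hom: "v \<in> hom C L B"
  and lam_cells: "lam \<in> cells C v (cmp C f u)"
  and lam_iso: "iso2 C lam"
  using pseudolimit f_hom unfolding pseudolimit_def hom_def by auto

lemma map_ex1:
  assumes "a \<in> hom C X A" "b \<in> hom C X B" "\<beta> \<in> cells C b (cmp C f a)" "iso2 C \<beta>"
  shows "\<exists>!m. m \<in> hom C X L \<and> cmp C u m = a \<and> cmp C v m = b \<and> rw C lam m = \<beta>"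
proof -
  have "X \<in> Ob C" "sr C f = A" "tg C f = B"
    using assms(1) f_hom hom_objects by (auto simp: hom_def)
  then show ?thesis
    using pseudolimit assms unfolding pseudolimit_def by blast
qed

lemma cell_ex1:
  assumes "m \<in> hom C X L" "m' \<in> hom C X L"
    "\<theta>u \<in> cells C (cmp C u m) (cmp C u m')" "\<theta>v \<in> cells C (cmp C v m) (cmp C v m')"
    "vc C (lw C f \<theta>u) (rw C lam m) = vc C (rw C lam m') \<theta>v"
  shows "\<exists>!\<theta>. \<theta> \<in> cells C m m' \<and> lw C u \<theta> = \<theta>u \<and> lw C v \<theta> = \<theta>v"
proof -
  have "X \<in> Ob C"
    using assms(1) hom_objects by blast
  then show ?thesis
    using pseudolimit assms unfolding pseudolimit_def by blast
qed

definition induced_map :: "'m \<Rightarrow> 'm \<Rightarrow> 'c \<Rightarrow> 'm" where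
  "induced_map a b \<beta> =
     (THE m. m \<in> hom C (sr C a) L \<and> cmp C u m = a \<and> cmp C v m = b \<and> rw C lam m = \<beta>)"

lemma induced_map:
  assumes "a \<in> hom C X A" "b \<in> hom C X B" "\<beta> \<in> cells C b (cmp C f a)" "iso2 C \<beta>"
  shows "induced_map a b \<beta> \<in> hom C X L"
    "cmp C u (induced_map a b \<beta>) = a"
    "cmp C v (induced_map a b \<beta>) = b"
    "rw C lam (induced_map a b \<beta>) = \<beta>"
  using theI'[OF map_ex1[OF assms]] assms(1) unfolding induced_map_def by (simp_all add: hom_def)

lemma lam_whisker:
  assumes "m \<in> hom C X L"
  shows "rw C lam m \<in> cells C (cmp C v m) (cmp C f (cmp C u m))" "iso2 C (rw C lam m)"
  using rw_cells[OF lam_cells v_hom assms] iso2_rw[OF lam_iso lam_cells v_hom assms]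
    comp_assoc[OF assms u_hom f_hom] by simp_all

lemma induced_map_eta:
  assumes "m \<in> hom C X L"
  shows "induced_map (cmp C u m) (cmp C v m) (rw C lam m) = m"
proof -
  have sr: "sr C (cmp C u m) = X"
    using comp_hom[OF assms u_hom] by (simp add: hom_def)
  show ?thesis
    unfolding induced_map_def sr
    by (rule the1_equality[OF map_ex1[OF comp_hom[OF assms u_hom] comp_hom[OF assms v_hom]
          lam_whisker[OF assms]]]) (simp add: assms)
qed

lemma map_eqI:
  assumes "m \<in> hom C X L" "m' \<in> hom C X L" "cmp C u m = cmp C u m'" "cmp C v m = cmp C v m'"
    "rw C lam m = rw C lam m'"
  shows "m = m'"
  by (metis induced_map_eta assms)

lemma induced_map_comp:
  assumes "a \<in> hom C X A" "b \<in> hom C X B" "\<beta> \<in> cells C b (cmp C f a)" "iso2 C \<beta>"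
    and k: "k \<in> hom C Y X"
  shows "induced_map (cmp C a k) (cmp C b k) (rw C \<beta> k) = cmp C (induced_map a b \<beta>) k"
proof -
  let ?m = "induced_map a b \<beta>"
  note m = induced_map[OF assms(1-4)]
  have "cmp C u (cmp C ?m k) = cmp C a k" "cmp C v (cmp C ?m k) = cmp C b k"
    "rw C lam (cmp C ?m k) = rw C \<beta> k"
    using comp_assoc[OF k m(1) u_hom] comp_assoc[OF k m(1) v_hom] rw_rw[OF lam_cells k m(1) v_hom]
    by (simp_all add: m)
  then show ?thesis
    using induced_map_eta[OF comp_hom[OF k m(1)]] by (simp only:)
qed

lemma components_compat:
  assumes "\<theta> \<in> cells C m m'" "m \<in> hom C X L"
  shows "vc C (lw C f (lw C u \<theta>)) (rw C lam m) = vc C (rw C lam m') (lw C v \<theta>)"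
  using whisker_exchange[OF assms lam_cells v_hom] lw_lw[OF assms u_hom f_hom] by simp

definition induced_cell :: "'m \<Rightarrow> 'm \<Rightarrow> 'c \<Rightarrow> 'c \<Rightarrow> 'c" where
  "induced_cell m m' \<theta>u \<theta>v = (THE \<theta>. \<theta> \<in> cells C m m' \<and> lw C u \<theta> = \<theta>u \<and> lw C v \<theta> = \<theta>v)"

lemma induced_cell:
  assumes "m \<in> hom C X L" "m' \<in> hom C X L"
    "\<theta>u \<in> cells C (cmp C u m) (cmp C u m')" "\<theta>v \<in> cells C (cmp C v m) (cmp C v m')"
    "vc C (lw C f \<theta>u) (rw C lam m) = vc C (rw C lam m') \<theta>v"
  shows "induced_cell m m' \<theta>u \<theta>v \<in> cells C m m'"
    "lw C u (induced_cell m m' \<theta>u \<theta>v) = \<theta>u"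
    "lw C v (induced_cell m m' \<theta>u \<theta>v) = \<theta>v"
  using theI'[OF cell_ex1[OF assms]] unfolding induced_cell_def by simp_all

lemma induced_cell_eta:
  assumes "\<theta> \<in> cells C m m'" "m \<in> hom C X L"
  shows "induced_cell m m' (lw C u \<theta>) (lw C v \<theta>) = \<theta>"
proof -
  have m': "m' \<in> hom C X L"
    using cells_cod_hom assms by blast
  show ?thesis
    unfolding induced_cell_def
    using the1_equality[OF cell_ex1[OF assms(2) m' lw_cells[OF assms u_hom] lw_cells[OF assms v_hom]
        components_compat[OF assms]]] assms(1) by simp
qed

lemma cell_eqI:
  assumes "\<theta> \<in> cells C m m'" "\<theta>' \<in> cells C m m'" "m \<in> hom C X L"
    "lw C u \<theta> = lw C u \<theta>'" "lw C v \<theta> = lw C v \<theta>'"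
  shows "\<theta> = \<theta>'"
  by (metis induced_cell_eta assms)

lemma iso2_by_components:
  assumes \<theta>: "\<theta> \<in> cells C m m'" and m: "m \<in> hom C X L"
    and iso_u: "iso2 C (lw C u \<theta>)" and iso_v: "iso2 C (lw C v \<theta>)"
  shows "iso2 C \<theta>"
proof -
  have m': "m' \<in> hom C X L"
    using cells_cod_hom \<theta> m by blast
  note cu = lw_cells[OF \<theta> m u_hom] and cv = lw_cells[OF \<theta> m v_hom]
  have um: "cmp C u m \<in> hom C X A"
    using m u_hom by (rule comp_hom)
  note fu = lw_cells[OF cu um f_hom]
    and iso_fu = iso2_lw[OF iso_u cu um f_hom] inv2_lw[OF iso_u cu um f_hom]
  let ?\<tau> = "induced_cell m' m (inv2 C (lw C u \<theta>)) (inv2 C (lw C v \<theta>))"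
  have "vc C (rw C lam m) (inv2 C (lw C v \<theta>)) = vc C (inv2 C (lw C f (lw C u \<theta>))) (rw C lam m')"
    using components_compat[OF \<theta> m] lam_whisker[OF m] lam_whisker[OF m']
    by (intro iso_square_inv2[OF iso_v cv iso_fu(1) fu]) simp_all
  then have \<tau>: "?\<tau> \<in> cells C m' m" "lw C u ?\<tau> = inv2 C (lw C u \<theta>)" "lw C v ?\<tau> = inv2 C (lw C v \<theta>)"
    using induced_cell[OF m' m inv2_cells[OF iso_u cu] inv2_cells[OF iso_v cv]] iso_fu(2)
    by simp_all
  show ?thesis
  proof (rule iso2I[OF \<theta> \<tau>(1)])
    show "vc C ?\<tau> \<theta> = i2 C m"
      using lw_vc[OF \<theta> \<tau>(1) m u_hom] lw_vc[OF \<theta> \<tau>(1) m v_hom]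
        lw_id2[OF m u_hom] lw_id2[OF m v_hom]
      by (intro cell_eqI[OF vc_cells[OF \<theta> \<tau>(1)] id2_cells[OF m] m])
        (simp_all add: \<tau> inv2_vc[OF iso_u cu] inv2_vc[OF iso_v cv])
    show "vc C \<theta> ?\<tau> = i2 C m'"
      using lw_vc[OF \<tau>(1) \<theta> m' u_hom] lw_vc[OF \<tau>(1) \<theta> m' v_hom]
        lw_id2[OF m' u_hom] lw_id2[OF m' v_hom]
      by (intro cell_eqI[OF vc_cells[OF \<tau>(1) \<theta>] id2_cells[OF m'] m'])
        (simp_all add: \<tau> vc_inv2[OF iso_u cu] vc_inv2[OF iso_v cv])
  qed
qed

end

lemma (in two_cat) iso_power_pseudolimit:
  assumes "iso_power C A P d c \<iota>"
  shows "pseudolimit C (i1 C A) P c d \<iota>"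
proof -
  have A: "A \<in> Ob C" and d: "d \<in> hom C P A" and c: "c \<in> hom C P A"
    using assms unfolding iso_power_def by blast+
  have id: "i1 C A \<in> hom C A A"
    using id_hom[OF A] .
  then have sr_tg: "sr C (i1 C A) = A" "tg C (i1 C A) = A"
    by (simp_all add: hom_def)
  show ?thesis
    unfolding pseudolimit_def sr_tg
  proof (intro conjI ballI impI)
    show "i1 C A \<in> Ar C" "iso2 C \<iota>" "P \<in> Ob C" "c \<in> hom C P A" "d \<in> hom C P A"
      using id assms c unfolding iso_power_def hom_def by auto
    show "\<iota> \<in> cells C d (cmp C (i1 C A) c)"
      using assms comp_id_left[OF c] unfolding iso_power_def by simp
  next
    fix X a b \<beta>
    assume "X \<in> Ob C" "a \<in> hom C X A" "b \<in> hom C X A" "\<beta> \<in> cells C b (cmp C (i1 C A) a)" "iso2 C \<beta>"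
    moreover from this have "\<beta> \<in> cells C b a"
      by simp
    ultimately have "\<exists>!m. m \<in> hom C X P \<and> cmp C d m = b \<and> cmp C c m = a \<and> rw C \<iota> m = \<beta>"
      using assms unfolding iso_power_def by blast
    then show "\<exists>!m. m \<in> hom C X P \<and> cmp C c m = a \<and> cmp C d m = b \<and> rw C \<iota> m = \<beta>"
      by (simp only: conj_ac)
  next
    fix X m m' \<theta>u \<theta>v
    assume "X \<in> Ob C" "m \<in> hom C X P" "m' \<in> hom C X P"
      "\<theta>u \<in> cells C (cmp C c m) (cmp C c m')" "\<theta>v \<in> cells C (cmp C d m) (cmp C d m')"
      "vc C (lw C (i1 C A) \<theta>u) (rw C \<iota> m) = vc C (rw C \<iota> m') \<theta>v"
    moreover from this have "lw C (i1 C A) \<theta>u = \<theta>u"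
      using lw_id comp_hom c by blast
    ultimately have "\<exists>!\<theta>. \<theta> \<in> cells C m m' \<and> lw C d \<theta> = \<theta>v \<and> lw C c \<theta> = \<theta>u"
      using assms unfolding iso_power_def by (metis (no_types, lifting))
    then show "\<exists>!\<theta>. \<theta> \<in> cells C m m' \<and> lw C c \<theta> = \<theta>u \<and> lw C d \<theta> = \<theta>v"
      by (simp only: conj_ac)
  qed
qed

locale leibniz_power = two_cat C + P: arrow_pseudolimit C f A B L u v lam
  for C :: "('o,'m,'c,'x) twocat_scheme" and f A B L u v lam +
  fixes AI :: 'o and dm cd w :: 'm and \<iota> :: 'c
  assumes iso_power: "iso_power C A AI dm cd \<iota>"
    and w_hom: "w \<in> hom C AI L"
    and u_w: "cmp C u w = cd"
    and v_w: "cmp C v w = cmp C f dm"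
    and lam_w: "rw C lam w = lw C f \<iota>"
begin

lemma dm_hom: "dm \<in> hom C AI A"
  and cd_hom: "cd \<in> hom C AI A"
  and iota_cells: "\<iota> \<in> cells C dm cd"
  and iota_iso: "iso2 C \<iota>"
  using iso_power unfolding iso_power_def by auto

sublocale I: arrow_pseudolimit C "i1 C A" A A AI cd dm \<iota>
  using iso_power iso_power_pseudolimit id_hom hom_objects[OF dm_hom]
  by unfold_locales auto

lemma induced_path:
  assumes "a \<in> hom C X A" "b \<in> hom C X A" "\<beta> \<in> cells C b a" "iso2 C \<beta>"
  shows "I.induced_map a b \<beta> \<in> hom C X AI"
    "cmp C cd (I.induced_map a b \<beta>) = a"
    "cmp C dm (I.induced_map a b \<beta>) = b"
    "rw C \<iota> (I.induced_map a b \<beta>) = \<beta>"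
  using I.induced_map[OF assms(1,2) _ assms(4)] assms(1,3) by simp_all

lemma induced_path_cell:
  assumes "m \<in> hom C X AI" "m' \<in> hom C X AI"
    "\<theta>c \<in> cells C (cmp C cd m) (cmp C cd m')" "\<theta>d \<in> cells C (cmp C dm m) (cmp C dm m')"
    "vc C \<theta>c (rw C \<iota> m) = vc C (rw C \<iota> m') \<theta>d"
  shows "I.induced_cell m m' \<theta>c \<theta>d \<in> cells C m m'"
    "lw C cd (I.induced_cell m m' \<theta>c \<theta>d) = \<theta>c"
    "lw C dm (I.induced_cell m m' \<theta>c \<theta>d) = \<theta>d"
  using I.induced_cell[OF assms(1-4)] assms(5) lw_id[OF assms(3) comp_hom[OF assms(1) cd_hom]]
  by simp_all

lemma iota_whisker:
  assumes "m \<in> hom C X AI"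
  shows "rw C \<iota> m \<in> cells C (cmp C dm m) (cmp C cd m)" "iso2 C (rw C \<iota> m)"
  using rw_cells[OF iota_cells dm_hom assms] iso2_rw[OF iota_iso iota_cells dm_hom assms]
  by simp_all

lemma u_w_comp: "m \<in> hom C X AI \<Longrightarrow> cmp C u (cmp C w m) = cmp C cd m"
  using comp_assoc[OF _ w_hom P.u_hom] u_w by simp

lemma v_w_comp: "m \<in> hom C X AI \<Longrightarrow> cmp C v (cmp C w m) = cmp C f (cmp C dm m)"
  using comp_assoc[OF _ w_hom P.v_hom] comp_assoc[OF _ dm_hom P.f_hom] v_w by simp

lemma lam_w_comp: "m \<in> hom C X AI \<Longrightarrow> rw C lam (cmp C w m) = lw C f (rw C \<iota> m)"
  using rw_rw[OF P.lam_cells _ w_hom P.v_hom] lw_rw[OF iota_cells _ dm_hom P.f_hom] lam_w by simp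

lemma u_lw_w: "\<sigma> \<in> cells C m m' \<Longrightarrow> m \<in> hom C X AI \<Longrightarrow> lw C u (lw C w \<sigma>) = lw C cd \<sigma>"
  using lw_lw[OF _ _ w_hom P.u_hom] u_w by simp

lemma v_lw_w: "\<sigma> \<in> cells C m m' \<Longrightarrow> m \<in> hom C X AI \<Longrightarrow> lw C v (lw C w \<sigma>) = lw C f (lw C dm \<sigma>)"
  using lw_lw[OF _ _ w_hom P.v_hom] lw_lw[OF _ _ dm_hom P.f_hom] v_w by simp

lemma u_component:
  assumes "\<gamma> \<in> cells C (cmp C w g) h" "g \<in> hom C X AI"
  shows "lw C u \<gamma> \<in> cells C (cmp C cd g) (cmp C u h)"
  using lw_cells[OF assms(1) comp_hom[OF assms(2) w_hom] P.u_hom] u_w_comp[OF assms(2)] by simp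

lemma v_component:
  assumes "\<gamma> \<in> cells C (cmp C w g) h" "g \<in> hom C X AI"
  shows "lw C v \<gamma> \<in> cells C (cmp C f (cmp C dm g)) (cmp C v h)"
  using lw_cells[OF assms(1) comp_hom[OF assms(2) w_hom] P.v_hom] v_w_comp[OF assms(2)] by simp

section \<open>Transferring liftings between \<open>f\<close> and the comparison map\<close>

definition w_lift_dm :: "('m \<Rightarrow> 'c \<Rightarrow> 'c) \<Rightarrow> 'm \<Rightarrow> 'c \<Rightarrow> 'c" where
  "w_lift_dm cl g \<gamma> = cl (cmp C dm g) (lw C v \<gamma>)"

definition w_lift_cod :: "('m \<Rightarrow> 'c \<Rightarrow> 'c) \<Rightarrow> 'm \<Rightarrow> 'c \<Rightarrow> 'm" where
  "w_lift_cod cl g \<gamma> = I.induced_map (cmp C u (c2 C \<gamma>)) (c2 C (w_lift_dm cl g \<gamma>))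
     (vc C (lw C u \<gamma>) (vc C (rw C \<iota> g) (inv2 C (w_lift_dm cl g \<gamma>))))"

definition w_lift :: "('m \<Rightarrow> 'c \<Rightarrow> 'c) \<Rightarrow> 'm \<Rightarrow> 'c \<Rightarrow> 'c" where
  "w_lift cl g \<gamma> = I.induced_cell g (w_lift_cod cl g \<gamma>) (lw C u \<gamma>) (w_lift_dm cl g \<gamma>)"

context
  fixes cl X g h \<gamma>
  assumes cl: "iso_lifting C f cl" and g: "g \<in> hom C X AI"
    and \<gamma>: "\<gamma> \<in> cells C (cmp C w g) h" and \<gamma>_iso: "iso2 C \<gamma>"
begin

private lemma wg: "cmp C w g \<in> hom C X L"
  using g w_hom by (rule comp_hom)

private lemma h: "h \<in> hom C X L"
  using cells_cod_hom[OF \<gamma> wg] .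

private lemma u\<gamma>: "lw C u \<gamma> \<in> cells C (cmp C cd g) (cmp C u h)" "iso2 C (lw C u \<gamma>)"
  using u_component[OF \<gamma> g] iso2_lw[OF \<gamma>_iso \<gamma> wg P.u_hom] .

private lemma v\<gamma>: "lw C v \<gamma> \<in> cells C (cmp C f (cmp C dm g)) (cmp C v h)" "iso2 C (lw C v \<gamma>)"
  using v_component[OF \<gamma> g] iso2_lw[OF \<gamma>_iso \<gamma> wg P.v_hom] .

lemma w_lift_dm:
  shows w_lift_dm_cod_hom: "c2 C (w_lift_dm cl g \<gamma>) \<in> hom C X A"
    and w_lift_dm_cells: "w_lift_dm cl g \<gamma> \<in> cells C (cmp C dm g) (c2 C (w_lift_dm cl g \<gamma>))"
    and w_lift_dm_iso: "iso2 C (w_lift_dm cl g \<gamma>)"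
    and f_w_lift_dm: "lw C f (w_lift_dm cl g \<gamma>) = lw C v \<gamma>"
  using iso_liftingD[OF cl _ v\<gamma>] comp_hom[OF g dm_hom] P.f_hom
  unfolding w_lift_dm_def by (simp_all add: hom_def)

lemma f_w_lift_dm_cod: "cmp C f (c2 C (w_lift_dm cl g \<gamma>)) = cmp C v h"
  using lw_cells[OF w_lift_dm_cells comp_hom[OF g dm_hom] P.f_hom] f_w_lift_dm v\<gamma>(1)
  by (simp add: cells_def)

private lemma path:
  "vc C (lw C u \<gamma>) (vc C (rw C \<iota> g) (inv2 C (w_lift_dm cl g \<gamma>)))
     \<in> cells C (c2 C (w_lift_dm cl g \<gamma>)) (cmp C u h)"
  "iso2 C (vc C (lw C u \<gamma>) (vc C (rw C \<iota> g) (inv2 C (w_lift_dm cl g \<gamma>))))"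
proof -
  note \<sigma>' = inv2_cells[OF w_lift_dm_iso w_lift_dm_cells] iso2_inv2[OF w_lift_dm_iso w_lift_dm_cells]
  note \<iota>g = iota_whisker[OF g]
  show "vc C (lw C u \<gamma>) (vc C (rw C \<iota> g) (inv2 C (w_lift_dm cl g \<gamma>)))
      \<in> cells C (c2 C (w_lift_dm cl g \<gamma>)) (cmp C u h)"
    using \<sigma>'(1) \<iota>g(1) u\<gamma>(1) by (intro vc_cells)
  show "iso2 C (vc C (lw C u \<gamma>) (vc C (rw C \<iota> g) (inv2 C (w_lift_dm cl g \<gamma>))))"
    using iso2_vc[OF iso2_vc[OF \<sigma>'(2,1) \<iota>g(2,1)] vc_cells[OF \<sigma>'(1) \<iota>g(1)] u\<gamma>(2,1)] .
qed

lemma w_lift_cod: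
  shows w_lift_cod_hom: "w_lift_cod cl g \<gamma> \<in> hom C X AI"
    and dm_w_lift_cod: "cmp C dm (w_lift_cod cl g \<gamma>) = c2 C (w_lift_dm cl g \<gamma>)"
    and cd_w_lift_cod: "cmp C cd (w_lift_cod cl g \<gamma>) = cmp C u h"
    and iota_w_lift_cod: "rw C \<iota> (w_lift_cod cl g \<gamma>) =
      vc C (lw C u \<gamma>) (vc C (rw C \<iota> g) (inv2 C (w_lift_dm cl g \<gamma>)))"
  using induced_path[OF comp_hom[OF h P.u_hom] w_lift_dm_cod_hom path] \<gamma>
  unfolding w_lift_cod_def by (simp_all add: cells_def)

lemma w_w_lift_cod: "cmp C w (w_lift_cod cl g \<gamma>) = h"
proof (rule P.map_eqI[OF comp_hom[OF w_lift_cod_hom w_hom] h])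
  show "cmp C u (cmp C w (w_lift_cod cl g \<gamma>)) = cmp C u h"
    using u_w_comp[OF w_lift_cod_hom] cd_w_lift_cod by simp
  show "cmp C v (cmp C w (w_lift_cod cl g \<gamma>)) = cmp C v h"
    using v_w_comp[OF w_lift_cod_hom] dm_w_lift_cod f_w_lift_dm_cod by simp
  let ?\<sigma> = "w_lift_dm cl g \<gamma>"
  note \<sigma>' = inv2_cells[OF w_lift_dm_iso w_lift_dm_cells] and \<iota>g = iota_whisker(1)[OF g]
  have dg: "cmp C dm g \<in> hom C X A" and cg: "cmp C cd g \<in> hom C X A"
    using g dm_hom cd_hom by (blast intro: comp_hom)+
  have "rw C lam (cmp C w (w_lift_cod cl g \<gamma>)) =
      lw C f (vc C (lw C u \<gamma>) (vc C (rw C \<iota> g) (inv2 C ?\<sigma>)))"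
    using lam_w_comp[OF w_lift_cod_hom] iota_w_lift_cod by simp
  also have "\<dots> = vc C (lw C f (lw C u \<gamma>)) (vc C (lw C f (rw C \<iota> g)) (inv2 C (lw C v \<gamma>)))"
    using lw_vc[OF vc_cells[OF \<sigma>' \<iota>g] u\<gamma>(1) w_lift_dm_cod_hom P.f_hom]
      lw_vc[OF \<sigma>' \<iota>g w_lift_dm_cod_hom P.f_hom] inv2_lw[OF w_lift_dm_iso w_lift_dm_cells dg P.f_hom]
    by (simp add: f_w_lift_dm)
  also have "\<dots> = vc C (vc C (lw C f (lw C u \<gamma>)) (lw C f (rw C \<iota> g))) (inv2 C (lw C v \<gamma>))"
    using vc_assoc[OF inv2_cells[OF v\<gamma>(2,1)] lw_cells[OF \<iota>g dg P.f_hom] lw_cells[OF u\<gamma>(1) cg P.f_hom]]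
    by simp
  also have "\<dots> = vc C (vc C (rw C lam h) (lw C v \<gamma>)) (inv2 C (lw C v \<gamma>))"
    using P.components_compat[OF \<gamma> wg] lam_w_comp[OF g] by simp
  also have "\<dots> = rw C lam h"
    using vc_inv2_cancel_right[OF v\<gamma>(2,1) P.lam_whisker(1)[OF h]] .
  finally show "rw C lam (cmp C w (w_lift_cod cl g \<gamma>)) = rw C lam h" .
qed

private lemma w_lift_compat:
  "vc C (lw C u \<gamma>) (rw C \<iota> g) = vc C (rw C \<iota> (w_lift_cod cl g \<gamma>)) (w_lift_dm cl g \<gamma>)"
proof -
  note \<sigma>' = inv2_cells[OF w_lift_dm_iso w_lift_dm_cells] and \<iota>g = iota_whisker(1)[OF g]
  have "vc C (rw C \<iota> (w_lift_cod cl g \<gamma>)) (w_lift_dm cl g \<gamma>) =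
      vc C (lw C u \<gamma>) (vc C (vc C (rw C \<iota> g) (inv2 C (w_lift_dm cl g \<gamma>))) (w_lift_dm cl g \<gamma>))"
    using iota_w_lift_cod vc_assoc[OF w_lift_dm_cells vc_cells[OF \<sigma>' \<iota>g] u\<gamma>(1)] by simp
  also have "\<dots> = vc C (lw C u \<gamma>) (rw C \<iota> g)"
    using inv2_vc_cancel_right[OF w_lift_dm_iso w_lift_dm_cells \<iota>g] by simp
  finally show ?thesis ..
qed

lemma w_lift:
  shows w_lift_cells: "w_lift cl g \<gamma> \<in> cells C g (w_lift_cod cl g \<gamma>)"
    and cd_w_lift: "lw C cd (w_lift cl g \<gamma>) = lw C u \<gamma>"
    and dm_w_lift: "lw C dm (w_lift cl g \<gamma>) = w_lift_dm cl g \<gamma>"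
  using induced_path_cell[OF g w_lift_cod_hom _ _ w_lift_compat] u\<gamma>(1) w_lift_dm_cells
  unfolding w_lift_def cd_w_lift_cod dm_w_lift_cod by simp_all

lemma w_lift_iso: "iso2 C (w_lift cl g \<gamma>)"
  using I.iso2_by_components[OF w_lift_cells g] u\<gamma>(2) w_lift_dm_iso
  by (simp add: cd_w_lift dm_w_lift)

lemma w_w_lift: "lw C w (w_lift cl g \<gamma>) = \<gamma>"
proof (rule P.cell_eqI[OF _ \<gamma> wg])
  show "lw C w (w_lift cl g \<gamma>) \<in> cells C (cmp C w g) h"
    using lw_cells[OF w_lift_cells g w_hom] w_w_lift_cod by simp
  show "lw C u (lw C w (w_lift cl g \<gamma>)) = lw C u \<gamma>"
    using u_lw_w[OF w_lift_cells g] cd_w_lift by simp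
  show "lw C v (lw C w (w_lift cl g \<gamma>)) = lw C v \<gamma>"
    using v_lw_w[OF w_lift_cells g] dm_w_lift f_w_lift_dm by simp
qed

end

lemma iso_lifting_w: "iso_lifting C f cl \<Longrightarrow> iso_lifting C w (w_lift cl)"
  using w_hom w_lift_cells w_lift_cod_hom w_lift_iso w_w_lift
  unfolding iso_lifting_def[of C w] by (auto simp: hom_def cells_def)

definition const_path :: "'m \<Rightarrow> 'm" where
  "const_path g = I.induced_map g g (i2 C g)"

definition f_lift_cod :: "'m \<Rightarrow> 'c \<Rightarrow> 'm" where
  "f_lift_cod g \<alpha> = P.induced_map g (c2 C \<alpha>) (inv2 C \<alpha>)"

definition f_lift_problem :: "'m \<Rightarrow> 'c \<Rightarrow> 'c" where
  "f_lift_problem g \<alpha> = P.induced_cell (cmp C w (const_path g)) (f_lift_cod g \<alpha>) (i2 C g) \<alpha>"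

definition f_lift :: "('m \<Rightarrow> 'c \<Rightarrow> 'c) \<Rightarrow> 'm \<Rightarrow> 'c \<Rightarrow> 'c" where
  "f_lift cl g \<alpha> = lw C dm (cl (const_path g) (f_lift_problem g \<alpha>))"

lemma const_path:
  assumes "g \<in> hom C X A"
  shows const_path_hom: "const_path g \<in> hom C X AI"
    and dm_const_path: "cmp C dm (const_path g) = g"
    and cd_const_path: "cmp C cd (const_path g) = g"
    and iota_const_path: "rw C \<iota> (const_path g) = i2 C g"
  using induced_path[OF assms assms id2_cells[OF assms] iso2_id2[OF assms]]
  unfolding const_path_def by simp_all

lemma w_const_path:
  assumes "g \<in> hom C X A"
  shows "cmp C u (cmp C w (const_path g)) = g" "cmp C v (cmp C w (const_path g)) = cmp C f g"
    "rw C lam (cmp C w (const_path g)) = i2 C (cmp C f g)"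
  using u_w_comp[OF const_path_hom[OF assms]] v_w_comp[OF const_path_hom[OF assms]]
    lam_w_comp[OF const_path_hom[OF assms]] lw_id2[OF assms P.f_hom]
  by (simp_all add: const_path[OF assms])

context
  fixes X g h \<alpha>
  assumes g: "g \<in> hom C X A" and \<alpha>: "\<alpha> \<in> cells C (cmp C f g) h" and \<alpha>_iso: "iso2 C \<alpha>"
begin

private lemma h_hom: "h \<in> hom C X B"
  using cells_cod_hom[OF \<alpha> comp_hom[OF g P.f_hom]] .

lemma f_lift_cod:
  shows f_lift_cod_hom: "f_lift_cod g \<alpha> \<in> hom C X L"
    and u_f_lift_cod: "cmp C u (f_lift_cod g \<alpha>) = g"
    and v_f_lift_cod: "cmp C v (f_lift_cod g \<alpha>) = h"
    and lam_f_lift_cod: "rw C lam (f_lift_cod g \<alpha>) = inv2 C \<alpha>"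
  using P.induced_map[OF g h_hom inv2_cells[OF \<alpha>_iso \<alpha>] iso2_inv2[OF \<alpha>_iso \<alpha>]] \<alpha>
  unfolding f_lift_cod_def by (simp_all add: cells_def)

lemma f_lift_problem:
  shows f_lift_problem_cells:
      "f_lift_problem g \<alpha> \<in> cells C (cmp C w (const_path g)) (f_lift_cod g \<alpha>)"
    and u_f_lift_problem: "lw C u (f_lift_problem g \<alpha>) = i2 C g"
    and v_f_lift_problem: "lw C v (f_lift_problem g \<alpha>) = \<alpha>"
    and f_lift_problem_iso: "iso2 C (f_lift_problem g \<alpha>)"
proof -
  have wc: "cmp C w (const_path g) \<in> hom C X L"
    using const_path_hom[OF g] w_hom by (rule comp_hom)
  have "vc C (lw C f (i2 C g)) (rw C lam (cmp C w (const_path g))) =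
      vc C (rw C lam (f_lift_cod g \<alpha>)) \<alpha>"
    using w_const_path[OF g] lw_id2[OF g P.f_hom] id2_cells[OF comp_hom[OF g P.f_hom]]
    by (simp add: lam_f_lift_cod inv2_vc[OF \<alpha>_iso \<alpha>])
  then show cells: "f_lift_problem g \<alpha> \<in> cells C (cmp C w (const_path g)) (f_lift_cod g \<alpha>)"
    and u: "lw C u (f_lift_problem g \<alpha>) = i2 C g" and v: "lw C v (f_lift_problem g \<alpha>) = \<alpha>"
    using P.induced_cell[OF wc f_lift_cod_hom] w_const_path[OF g] id2_cells[OF g] \<alpha>
    unfolding f_lift_problem_def by (simp_all add: u_f_lift_cod v_f_lift_cod)
  show "iso2 C (f_lift_problem g \<alpha>)"
    using P.iso2_by_components[OF cells wc] iso2_id2[OF g] \<alpha>_iso by (simp add: u v)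
qed

end

lemma iso_lifting_f:
  assumes cl: "iso_lifting C w cl"
  shows "iso_lifting C f (f_lift cl)"
  unfolding iso_lifting_def
proof (intro conjI ballI impI)
  show "f \<in> Ar C"
    using P.f_hom by (simp add: hom_def)
  fix X g h \<alpha>
  assume "X \<in> Ob C" "g \<in> hom C X (sr C f)" "h \<in> hom C X (tg C f)"
    and \<alpha>: "\<alpha> \<in> cells C (cmp C f g) h" and \<alpha>_iso: "iso2 C \<alpha>"
  then have g: "g \<in> hom C X A"
    using P.f_hom by (simp add: hom_def)
  let ?\<sigma> = "cl (const_path g) (f_lift_problem g \<alpha>)"
  have \<sigma>: "c2 C ?\<sigma> \<in> hom C X AI" "?\<sigma> \<in> cells C (const_path g) (c2 C ?\<sigma>)" "iso2 C ?\<sigma>"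
    "lw C w ?\<sigma> = f_lift_problem g \<alpha>"
    using iso_liftingD[OF cl _ f_lift_problem_cells[OF g \<alpha> \<alpha>_iso] f_lift_problem_iso[OF g \<alpha> \<alpha>_iso]]
      const_path_hom[OF g] w_hom
    by (simp_all add: hom_def)
  have "lw C dm ?\<sigma> \<in> cells C g (cmp C dm (c2 C ?\<sigma>))"
    using lw_cells[OF \<sigma>(2) const_path_hom[OF g] dm_hom] dm_const_path[OF g] by simp
  then show "c2 C (f_lift cl g \<alpha>) \<in> hom C X (sr C f)"
    "f_lift cl g \<alpha> \<in> cells C g (c2 C (f_lift cl g \<alpha>))"
    using comp_hom[OF \<sigma>(1) dm_hom] P.f_hom unfolding f_lift_def by (simp_all add: cells_def hom_def)
  show "iso2 C (f_lift cl g \<alpha>)"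
    using iso2_lw[OF \<sigma>(3,2) const_path_hom[OF g] dm_hom] unfolding f_lift_def .
  show "lw C f (f_lift cl g \<alpha>) = \<alpha>"
    using v_lw_w[OF \<sigma>(2) const_path_hom[OF g]] \<sigma>(4) v_f_lift_problem[OF g \<alpha> \<alpha>_iso]
    unfolding f_lift_def by simp
qed

section \<open>The comparison map is a retract equivalence\<close>

lemma section_of_w:
  assumes cl: "iso_lifting C f cl"
  obtains s \<tau> where "s \<in> hom C L AI" "cmp C w s = i1 C L" "cmp C cd s = u"
    "\<tau> \<in> cells C u (cmp C dm s)" "iso2 C \<tau>" "rw C \<iota> s = inv2 C \<tau>"
proof -
  have L: "L \<in> Ob C"
    using hom_objects[OF P.u_hom] by blast
  note lam' = inv2_cells[OF P.lam_iso P.lam_cells] iso2_inv2[OF P.lam_iso P.lam_cells]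
  define \<tau> where "\<tau> = cl u (inv2 C lam)"
  have \<tau>: "c2 C \<tau> \<in> hom C L A" "\<tau> \<in> cells C u (c2 C \<tau>)" "iso2 C \<tau>" "lw C f \<tau> = inv2 C lam"
    using iso_liftingD[OF cl _ lam'] P.u_hom P.f_hom unfolding \<tau>_def by (simp_all add: hom_def)
  have f_cod: "cmp C f (c2 C \<tau>) = v"
    using lw_cells[OF \<tau>(2) P.u_hom P.f_hom] \<tau>(4) lam'(1) by (simp add: cells_def)
  define s where "s = I.induced_map u (c2 C \<tau>) (inv2 C \<tau>)"
  have s: "s \<in> hom C L AI" "cmp C cd s = u" "cmp C dm s = c2 C \<tau>" "rw C \<iota> s = inv2 C \<tau>"
    using induced_path[OF P.u_hom \<tau>(1) inv2_cells[OF \<tau>(3,2)] iso2_inv2[OF \<tau>(3,2)]]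
    unfolding s_def by simp_all
  have "cmp C w s = i1 C L"
  proof (rule P.map_eqI[OF comp_hom[OF s(1) w_hom] id_hom[OF L]])
    show "cmp C u (cmp C w s) = cmp C u (i1 C L)"
      using u_w_comp[OF s(1)] s(2) P.u_hom by simp
    show "cmp C v (cmp C w s) = cmp C v (i1 C L)"
      using v_w_comp[OF s(1)] s(3) f_cod P.v_hom by simp
    have "rw C lam (cmp C w s) = inv2 C (inv2 C lam)"
      using lam_w_comp[OF s(1)] s(4) inv2_lw[OF \<tau>(3,2) P.u_hom P.f_hom] \<tau>(4) by simp
    then show "rw C lam (cmp C w s) = rw C lam (i1 C L)"
      using inv2_inv2[OF P.lam_iso P.lam_cells] rw_id[OF P.lam_cells P.v_hom] by simp
  qed
  then show thesis
    using that s \<tau>(2,3) by simp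
qed

lemma unit_iso:
  assumes s: "s \<in> hom C L AI" and cd_s: "cmp C cd s = u"
    and \<tau>: "\<tau> \<in> cells C u (cmp C dm s)" and \<tau>_iso: "iso2 C \<tau>" and iota_s: "rw C \<iota> s = inv2 C \<tau>"
  shows "\<exists>\<eta>\<in>cells C (i1 C AI) (cmp C s w). iso2 C \<eta>"
proof -
  have sw: "cmp C s w \<in> hom C AI AI"
    using w_hom s by (rule comp_hom)
  have id: "i1 C AI \<in> hom C AI AI"
    using hom_objects[OF dm_hom] id_hom by blast
  have \<tau>w: "rw C \<tau> w \<in> cells C cd (cmp C dm (cmp C s w))" "iso2 C (rw C \<tau> w)"
    using rw_cells[OF \<tau> P.u_hom w_hom] iso2_rw[OF \<tau>_iso \<tau> P.u_hom w_hom] u_w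
      comp_assoc[OF w_hom s dm_hom]
    by simp_all
  let ?\<delta> = "vc C (rw C \<tau> w) \<iota>"
  let ?\<eta> = "I.induced_cell (i1 C AI) (cmp C s w) (i2 C cd) ?\<delta>"
  have \<delta>: "?\<delta> \<in> cells C (cmp C dm (i1 C AI)) (cmp C dm (cmp C s w))" "iso2 C ?\<delta>"
    using vc_cells[OF iota_cells \<tau>w(1)] iso2_vc[OF iota_iso iota_cells \<tau>w(2,1)] dm_hom by simp_all
  have cd_sw: "cmp C cd (cmp C s w) = cd"
    using comp_assoc[OF w_hom s cd_hom] cd_s u_w by simp
  have "rw C \<iota> (cmp C s w) = inv2 C (rw C \<tau> w)"
    using rw_rw[OF iota_cells w_hom s dm_hom] iota_s inv2_rw[OF \<tau>_iso \<tau> P.u_hom w_hom] by simp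
  then have "vc C (i2 C cd) (rw C \<iota> (i1 C AI)) = vc C (rw C \<iota> (cmp C s w)) ?\<delta>"
    using inv2_vc_cancel[OF \<tau>w(2,1) iota_cells] rw_id[OF iota_cells dm_hom] iota_cells by simp
  moreover have "i2 C cd \<in> cells C (cmp C cd (i1 C AI)) (cmp C cd (cmp C s w))"
    using id2_cells[OF cd_hom] cd_sw cd_hom by simp
  ultimately have \<eta>: "?\<eta> \<in> cells C (i1 C AI) (cmp C s w)" "lw C cd ?\<eta> = i2 C cd" "lw C dm ?\<eta> = ?\<delta>"
    using induced_path_cell[OF id sw _ \<delta>(1)] by simp_all
  then have "iso2 C ?\<eta>"
    using I.iso2_by_components[OF \<eta>(1) id] iso2_id2[OF cd_hom] \<delta>(2) by simp
  then show ?thesis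
    using \<eta>(1) by blast
qed

lemma retract_equivalence_w:
  assumes "iso_lifting C f cl"
  shows "retract_equivalence C w"
proof -
  obtain s \<tau> where s: "s \<in> hom C L AI" "cmp C w s = i1 C L" "cmp C cd s = u"
    and \<tau>: "\<tau> \<in> cells C u (cmp C dm s)" "iso2 C \<tau>" "rw C \<iota> s = inv2 C \<tau>"
    using section_of_w[OF assms] .
  obtain \<eta> where "\<eta> \<in> cells C (i1 C AI) (cmp C s w)" "iso2 C \<eta>"
    using unit_iso[OF s(1,3) \<tau>] ..
  moreover have "i2 C (cmp C w s) \<in> cells C (cmp C w s) (i1 C L)" "iso2 C (i2 C (cmp C w s))"
    using s(2) id2_cells[OF id_hom] iso2_id2[OF id_hom] hom_objects[OF P.u_hom] by simp_all
  moreover have "w \<in> Ar C" "sr C w = AI" "tg C w = L"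
    using w_hom by (simp_all add: hom_def)
  ultimately show ?thesis
    using s(1,2) unfolding retract_equivalence_def equivalence_def by metis
qed

section \<open>Naturality and normality of the transferred liftings\<close>

context
  fixes cl X Y g h \<gamma> k
  assumes cl: "cleavage C f cl" and g: "g \<in> hom C X AI"
    and \<gamma>: "\<gamma> \<in> cells C (cmp C w g) h" and \<gamma>_iso: "iso2 C \<gamma>" and k: "k \<in> hom C Y X"
begin

private lemma lifting: "iso_lifting C f cl"
  using cl by (rule cleavage_imp_iso_lifting)

private lemma wg_hom: "cmp C w g \<in> hom C X L"
  using g w_hom by (rule comp_hom)

private lemma gk: "cmp C g k \<in> hom C Y AI"
  using k g by (rule comp_hom)

private lemma \<gamma>k: "rw C \<gamma> k \<in> cells C (cmp C w (cmp C g k)) (cmp C h k)" "iso2 C (rw C \<gamma> k)"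
  using rw_cells[OF \<gamma> wg_hom k] iso2_rw[OF \<gamma>_iso \<gamma> wg_hom k] comp_assoc[OF k g w_hom] by simp_all

lemma w_lift_dm_natural: "w_lift_dm cl (cmp C g k) (rw C \<gamma> k) = rw C (w_lift_dm cl g \<gamma>) k"
proof -
  have "w_lift_dm cl (cmp C g k) (rw C \<gamma> k) = cl (cmp C (cmp C dm g) k) (rw C (lw C v \<gamma>) k)"
    unfolding w_lift_dm_def using comp_assoc[OF k g dm_hom] lw_rw[OF \<gamma> k wg_hom P.v_hom] by simp
  also have "\<dots> = rw C (w_lift_dm cl g \<gamma>) k"
    unfolding w_lift_dm_def using comp_hom[OF g dm_hom] P.f_hom v_component[OF \<gamma> g]
      iso2_lw[OF \<gamma>_iso \<gamma> wg_hom P.v_hom] k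
    by (intro cleavage_natural[OF cl]) (simp_all add: hom_def)
  finally show ?thesis .
qed

lemma w_lift_cod_natural: "w_lift_cod cl (cmp C g k) (rw C \<gamma> k) = cmp C (w_lift_cod cl g \<gamma>) k"
proof (rule I.map_eqI[OF w_lift_cod_hom[OF lifting gk \<gamma>k]
      comp_hom[OF k w_lift_cod_hom[OF lifting g \<gamma> \<gamma>_iso]]])
  let ?\<sigma> = "w_lift_dm cl g \<gamma>" and ?h' = "w_lift_cod cl g \<gamma>"
  note h' = w_lift_cod[OF lifting g \<gamma> \<gamma>_iso] and h'k = w_lift_cod[OF lifting gk \<gamma>k]
  note \<sigma> = w_lift_dm[OF lifting g \<gamma> \<gamma>_iso]
  show "cmp C dm (w_lift_cod cl (cmp C g k) (rw C \<gamma> k)) = cmp C dm (cmp C ?h' k)"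
    using h'k(2) w_lift_dm_natural rw_cells[OF \<sigma>(2) comp_hom[OF g dm_hom] k]
      comp_assoc[OF k h'(1) dm_hom] h'(2)
    by (simp add: cells_def)
  show "cmp C cd (w_lift_cod cl (cmp C g k) (rw C \<gamma> k)) = cmp C cd (cmp C ?h' k)"
    using h'k(3) h'(3) comp_assoc[OF k h'(1) cd_hom]
      comp_assoc[OF k cells_cod_hom[OF \<gamma> wg_hom] P.u_hom]
    by simp
  have "vc C (lw C u (rw C \<gamma> k)) (vc C (rw C \<iota> (cmp C g k)) (inv2 C (rw C ?\<sigma> k))) =
      vc C (rw C (lw C u \<gamma>) k) (vc C (rw C (rw C \<iota> g) k) (rw C (inv2 C ?\<sigma>) k))"
    using lw_rw[OF \<gamma> k wg_hom P.u_hom] rw_rw[OF iota_cells k g dm_hom]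
      inv2_rw[OF \<sigma>(3,2) comp_hom[OF g dm_hom] k] by simp
  also have "\<dots> = rw C (rw C \<iota> ?h') k"
    using rw_vc[OF inv2_cells[OF \<sigma>(3,2)] iota_whisker(1)[OF g] \<sigma>(1) k]
      rw_vc[OF vc_cells[OF inv2_cells[OF \<sigma>(3,2)] iota_whisker(1)[OF g]] u_component[OF \<gamma> g] \<sigma>(1) k]
    by (simp add: h'(4))
  finally show "rw C \<iota> (w_lift_cod cl (cmp C g k) (rw C \<gamma> k)) = rw C \<iota> (cmp C ?h' k)"
    using h'k(4) w_lift_dm_natural rw_rw[OF iota_cells k h'(1) dm_hom] by simp
qed

lemma w_lift_natural: "w_lift cl (cmp C g k) (rw C \<gamma> k) = rw C (w_lift cl g \<gamma>) k"
proof (rule I.cell_eqI[OF _ _ gk])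
  note W = w_lift[OF lifting g \<gamma> \<gamma>_iso]
  show "w_lift cl (cmp C g k) (rw C \<gamma> k) \<in> cells C (cmp C g k) (cmp C (w_lift_cod cl g \<gamma>) k)"
    using w_lift_cells[OF lifting gk \<gamma>k] w_lift_cod_natural by simp
  show "rw C (w_lift cl g \<gamma>) k \<in> cells C (cmp C g k) (cmp C (w_lift_cod cl g \<gamma>) k)"
    using rw_cells[OF W(1) g k] .
  show "lw C cd (w_lift cl (cmp C g k) (rw C \<gamma> k)) = lw C cd (rw C (w_lift cl g \<gamma>) k)"
    using cd_w_lift[OF lifting gk \<gamma>k] lw_rw[OF \<gamma> k wg_hom P.u_hom] lw_rw[OF W(1) k g cd_hom] W(2)
    by simp
  show "lw C dm (w_lift cl (cmp C g k) (rw C \<gamma> k)) = lw C dm (rw C (w_lift cl g \<gamma>) k)"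
    using dm_w_lift[OF lifting gk \<gamma>k] w_lift_dm_natural lw_rw[OF W(1) k g dm_hom] W(3) by simp
qed

end

lemma w_lift_normal:
  assumes cl: "normal_cleavage C f cl" and g: "g \<in> hom C X AI"
  shows "w_lift cl g (i2 C (cmp C w g)) = i2 C g"
proof -
  have lifting: "iso_lifting C f cl"
    using cl unfolding normal_cleavage_def by (blast intro: cleavage_imp_iso_lifting)
  have wg: "cmp C w g \<in> hom C X L" and dg: "cmp C dm g \<in> hom C X A" and cg: "cmp C cd g \<in> hom C X A"
    using g w_hom dm_hom cd_hom by (blast intro: comp_hom)+
  note problem = g id2_cells[OF wg] iso2_id2[OF wg]
  have lu: "lw C u (i2 C (cmp C w g)) = i2 C (cmp C cd g)"
    using lw_id2[OF wg P.u_hom] u_w_comp[OF g] by simp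
  have \<sigma>: "w_lift_dm cl g (i2 C (cmp C w g)) = i2 C (cmp C dm g)"
    using lw_id2[OF wg P.v_hom] v_w_comp[OF g] normal_cleavageD[OF cl] dg P.f_hom
    unfolding w_lift_dm_def by (simp add: hom_def)
  have h': "w_lift_cod cl g (i2 C (cmp C w g)) = g"
  proof (rule I.map_eqI[OF w_lift_cod_hom[OF lifting problem] g])
    show "cmp C dm (w_lift_cod cl g (i2 C (cmp C w g))) = cmp C dm g"
      using dm_w_lift_cod[OF lifting problem] \<sigma> id2_cells[OF dg] by (simp add: cells_def)
    show "cmp C cd (w_lift_cod cl g (i2 C (cmp C w g))) = cmp C cd g"
      using cd_w_lift_cod[OF lifting problem] u_w_comp[OF g] by simp
    show "rw C \<iota> (w_lift_cod cl g (i2 C (cmp C w g))) = rw C \<iota> g"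
      using iota_w_lift_cod[OF lifting problem] iota_whisker(1)[OF g]
      by (simp add: \<sigma> lu inv2_id2[OF dg])
  qed
  show ?thesis
  proof (rule I.cell_eqI[OF _ id2_cells[OF g] g])
    show "w_lift cl g (i2 C (cmp C w g)) \<in> cells C g g"
      using w_lift_cells[OF lifting problem] h' by simp
    show "lw C cd (w_lift cl g (i2 C (cmp C w g))) = lw C cd (i2 C g)"
      using cd_w_lift[OF lifting problem] lu lw_id2[OF g cd_hom] by simp
    show "lw C dm (w_lift cl g (i2 C (cmp C w g))) = lw C dm (i2 C g)"
      using dm_w_lift[OF lifting problem] \<sigma> lw_id2[OF g dm_hom] by simp
  qed
qed

lemma cleavage_w:
  assumes "cleavage C f cl"
  shows "cleavage C w (w_lift cl)"
proof (rule cleavageI)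
  show "iso_lifting C w (w_lift cl)"
    using iso_lifting_w[OF cleavage_imp_iso_lifting[OF assms]] .
  fix X Y g h \<gamma> k
  assume "g \<in> hom C X (sr C w)" "\<gamma> \<in> cells C (cmp C w g) h" "iso2 C \<gamma>" "k \<in> hom C Y X"
  then show "w_lift cl (cmp C g k) (rw C \<gamma> k) = rw C (w_lift cl g \<gamma>) k"
    using w_lift_natural[OF assms] w_hom by (simp add: hom_def)
qed

context
  fixes cl X Y g h \<alpha> k
  assumes cl: "cleavage C w cl" and g: "g \<in> hom C X A"
    and \<alpha>: "\<alpha> \<in> cells C (cmp C f g) h" and \<alpha>_iso: "iso2 C \<alpha>" and k: "k \<in> hom C Y X"
begin

private lemma gk_hom: "cmp C g k \<in> hom C Y A"
  using k g by (rule comp_hom)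

private lemma \<alpha>k: "rw C \<alpha> k \<in> cells C (cmp C f (cmp C g k)) (cmp C h k)" "iso2 C (rw C \<alpha> k)"
  using rw_cells[OF \<alpha> comp_hom[OF g P.f_hom] k] iso2_rw[OF \<alpha>_iso \<alpha> comp_hom[OF g P.f_hom] k]
    comp_assoc[OF k g P.f_hom] by simp_all

lemma const_path_natural: "const_path (cmp C g k) = cmp C (const_path g) k"
  using I.induced_map_comp[OF g g _ iso2_id2[OF g] k] id2_cells[OF g] g
  unfolding const_path_def by (simp add: rw_id2[OF k g])

lemma f_lift_cod_natural: "f_lift_cod (cmp C g k) (rw C \<alpha> k) = cmp C (f_lift_cod g \<alpha>) k"
proof -
  have "h \<in> hom C X B" "c2 C \<alpha> = h" "c2 C (rw C \<alpha> k) = cmp C h k"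
    using cells_cod_hom[OF \<alpha> comp_hom[OF g P.f_hom]] \<alpha> \<alpha>k(1) by (simp_all add: cells_def)
  then show ?thesis
    using P.induced_map_comp[OF g _ inv2_cells[OF \<alpha>_iso \<alpha>] iso2_inv2[OF \<alpha>_iso \<alpha>] k]
    unfolding f_lift_cod_def by (simp add: inv2_rw[OF \<alpha>_iso \<alpha> comp_hom[OF g P.f_hom] k])
qed

lemma f_lift_problem_natural: "f_lift_problem (cmp C g k) (rw C \<alpha> k) = rw C (f_lift_problem g \<alpha>) k"
proof -
  note problem = f_lift_problem[OF g \<alpha> \<alpha>_iso]
  have wc: "cmp C w (const_path g) \<in> hom C X L"
    using const_path_hom[OF g] w_hom by (rule comp_hom)
  show ?thesis
  proof (rule P.cell_eqI[OF _ rw_cells[OF problem(1) wc k] comp_hom[OF k wc]])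
    show "f_lift_problem (cmp C g k) (rw C \<alpha> k) \<in>
        cells C (cmp C (cmp C w (const_path g)) k) (cmp C (f_lift_cod g \<alpha>) k)"
      using f_lift_problem_cells[OF gk_hom \<alpha>k] const_path_natural f_lift_cod_natural
        comp_assoc[OF k const_path_hom[OF g] w_hom] by simp
    show "lw C u (f_lift_problem (cmp C g k) (rw C \<alpha> k)) = lw C u (rw C (f_lift_problem g \<alpha>) k)"
      using u_f_lift_problem[OF gk_hom \<alpha>k] lw_rw[OF problem(1) k wc P.u_hom] problem(2)
        rw_id2[OF k g]
      by simp
    show "lw C v (f_lift_problem (cmp C g k) (rw C \<alpha> k)) = lw C v (rw C (f_lift_problem g \<alpha>) k)"
      using v_f_lift_problem[OF gk_hom \<alpha>k] lw_rw[OF problem(1) k wc P.v_hom] problem(3) by simp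
  qed
qed

lemma f_lift_natural: "f_lift cl (cmp C g k) (rw C \<alpha> k) = rw C (f_lift cl g \<alpha>) k"
proof -
  note problem = f_lift_problem[OF g \<alpha> \<alpha>_iso]
  have c: "const_path g \<in> hom C X (sr C w)"
    using const_path_hom[OF g] w_hom by (simp add: hom_def)
  have "cl (cmp C (const_path g) k) (rw C (f_lift_problem g \<alpha>) k) =
      rw C (cl (const_path g) (f_lift_problem g \<alpha>)) k"
    using cleavage_natural[OF cl c problem(1,4) k] .
  moreover have "cl (const_path g) (f_lift_problem g \<alpha>) \<in>
      cells C (const_path g) (c2 C (cl (const_path g) (f_lift_problem g \<alpha>)))"
    using iso_liftingD(2)[OF cleavage_imp_iso_lifting[OF cl] c problem(1,4)] .
  ultimately show ?thesis
    unfolding f_lift_def const_path_natural f_lift_problem_natural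
    using lw_rw[OF _ k const_path_hom[OF g] dm_hom] by simp
qed

end

lemma f_lift_normal:
  assumes cl: "normal_cleavage C w cl" and g: "g \<in> hom C X A"
  shows "f_lift cl g (i2 C (cmp C f g)) = i2 C g"
proof -
  have fg: "cmp C f g \<in> hom C X B"
    using g P.f_hom by (rule comp_hom)
  have wc: "cmp C w (const_path g) \<in> hom C X L"
    using const_path_hom[OF g] w_hom by (rule comp_hom)
  note problem = g id2_cells[OF fg] iso2_id2[OF fg]
  have n: "f_lift_cod g (i2 C (cmp C f g)) = cmp C w (const_path g)"
    using u_f_lift_cod[OF problem] v_f_lift_cod[OF problem] lam_f_lift_cod[OF problem]
      w_const_path[OF g] inv2_id2[OF fg]
    by (intro P.map_eqI[OF f_lift_cod_hom[OF problem] wc]) simp_all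
  have "f_lift_problem g (i2 C (cmp C f g)) = i2 C (cmp C w (const_path g))"
  proof (rule P.cell_eqI[OF _ id2_cells[OF wc] wc])
    show "f_lift_problem g (i2 C (cmp C f g)) \<in>
        cells C (cmp C w (const_path g)) (cmp C w (const_path g))"
      using f_lift_problem_cells[OF problem] n by simp
    show "lw C u (f_lift_problem g (i2 C (cmp C f g))) = lw C u (i2 C (cmp C w (const_path g)))"
      using u_f_lift_problem[OF problem] lw_id2[OF wc P.u_hom] w_const_path[OF g] by simp
    show "lw C v (f_lift_problem g (i2 C (cmp C f g))) = lw C v (i2 C (cmp C w (const_path g)))"
      using v_f_lift_problem[OF problem] lw_id2[OF wc P.v_hom] w_const_path[OF g] by simp
  qed
  moreover have "cl (const_path g) (i2 C (cmp C w (const_path g))) = i2 C (const_path g)"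
    using normal_cleavageD[OF cl] const_path_hom[OF g] w_hom by (simp add: hom_def)
  ultimately show ?thesis
    unfolding f_lift_def using lw_id2[OF const_path_hom[OF g] dm_hom] dm_const_path[OF g] by simp
qed

lemma cleavage_f:
  assumes "cleavage C w cl"
  shows "cleavage C f (f_lift cl)"
proof (rule cleavageI)
  show "iso_lifting C f (f_lift cl)"
    using iso_lifting_f[OF cleavage_imp_iso_lifting[OF assms]] .
  fix X Y g h \<alpha> k
  assume "g \<in> hom C X (sr C f)" "\<alpha> \<in> cells C (cmp C f g) h" "iso2 C \<alpha>" "k \<in> hom C Y X"
  then show "f_lift cl (cmp C g k) (rw C \<alpha> k) = rw C (f_lift cl g \<alpha>) k"
    using f_lift_natural[OF assms] P.f_hom by (simp add: hom_def)
qed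

lemma normal_cleavage_w: "normal_cleavage C f cl \<Longrightarrow> normal_cleavage C w (w_lift cl)"
  using cleavage_w w_lift_normal w_hom unfolding normal_cleavage_def by (simp add: hom_def)

lemma normal_cleavage_f: "normal_cleavage C w cl \<Longrightarrow> normal_cleavage C f (f_lift cl)"
  using cleavage_f f_lift_normal P.f_hom unfolding normal_cleavage_def by (simp add: hom_def)

lemma rep_isofib_iff: "rep_isofib C f \<longleftrightarrow> rep_isofib C w"
  unfolding rep_isofib_iff_iso_lifting using iso_lifting_w iso_lifting_f by blast

lemma normal_isofib_iff: "normal_isofib C f \<longleftrightarrow> normal_isofib C w"
  unfolding normal_isofib_def using rep_isofib_iff normal_cleavage_w normal_cleavage_f by blast

lemma retract_equivalence_if_rep_isofib: "rep_isofib C f \<Longrightarrow> retract_equivalence C w"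
  unfolding rep_isofib_iff_iso_lifting using retract_equivalence_w by blast

end

theorem proposition3p9:
  fixes C :: "('o, 'm, 'c) twocat"
  assumes "two_category C"
    and "has_pseudolimits_of_arrows C"
    and "has_iso_powers C"
    and "f \<in> hom C A B"
    and "iso_power C A AI dm cd \<iota>"
    and "pseudolimit C f L u v lam"
    and "w \<in> hom C AI L"
    and "cmp C u w = cd"
    and "cmp C v w = cmp C f dm"
    and "rw C lam w = lw C f \<iota>"
  shows "(rep_isofib C f \<longleftrightarrow> rep_isofib C w)
       \<and> (normal_isofib C f \<longleftrightarrow> normal_isofib C w)
       \<and> (rep_isofib C f \<longrightarrow> retract_equivalence C w)"
proof -
  interpret leibniz_power C f A B L u v lam AI dm cd w \<iota>
    using assms by unfold_locales
  show ?thesis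
    using rep_isofib_iff normal_isofib_iff retract_equivalence_if_rep_isofib by blast
qed

end
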